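(* Let $p\leq q$ and $L,M\in\mathrm{Gr}_{p,q}$ with Jordan angles $\psi_j=\Psi_j[L,M]$, and assume $\psi_1\neq0$, $\psi_p\neq\pi/2$, and $\psi_{j+1}\neq\psi_j$ for all $j$. Let $e_1,\dots,e_p$ be an orthonormal basis of $L$ and $f_1,\dots,f_p$ an orthonormal basis of $M$ with $\langle e_i,f_j\rangle=0$ for $i\neq j$ and $\langle e_j,f_j\rangle=\cos\psi_j$. Let $r_1,\dots,r_q$ be an orthonormal basis of $M^\perp$ such that $e_j=f_j\cos\psi_j-r_j\sin\psi_j$ for $j=1,\dots,p$. Let $H:M\to M^\perp$ be a tangent vector to $\mathrm{Gr}_{p,q}$ at $M$, with matrix elements $h_{jk}$ defined by $Hf_j=\sum_{k=1}^q h_{jk}r_k$. Let $M(\varepsilon)$ be a $C^\infty$-smooth curve in $\mathrm{Gr}_{p,q}$ with $M(0)=M$ and $M'(0)=H$. Then for every $j=1,\dots,p$, $$\frac{d}{d\varepsilon}\Psi_j[L,M(\varepsilon)]\Big|_{\varepsilon=0}=h_{jj}.$$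
   Context: $\mathrm{Gr}_{p,q}$ is the set of $p$-dimensional linear subspaces of $\mathbb{R}^{p+q}$ with the standard scalar product. For $L,M\in\mathrm{Gr}_{p,q}$ with orthonormal bases $e_i$ of $L$, $f_j$ of $M$, let $\lambda_1\geq\dots\geq\lambda_p$ be the singular values of the matrix $(\langle e_i,f_j\rangle)$; the Jordan angles are $\Psi_j[L,M]=\arccos\lambda_j$, $0\leq\Psi_1\leq\dots\leq\Psi_p\leq\pi/2$. Tangent vectors at $M$ are identified with linear operators $M\to M^\perp$: for a curve with $M(0)=M$, $M(\varepsilon)$ is for small $\varepsilon$ the graph of $A(\varepsilon):M\to M^\perp$ with $A(0)=0$, and $M'(0):=A'(0)$. *)

theory Defs
  imports "HOL-Analysis.Analysis"
begin

text \<open>The Grassmannian Gr_{p,q}: p-dimensional linear subspaces of R^(p+q).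
  The ambient space is real^'n, with CARD('n) = p + q assumed in the statement.\<close>
definition Gr :: "nat \<Rightarrow> ('n::finite) itself \<Rightarrow> (real^'n) set set" where
  "Gr p _ = {L. subspace L \<and> dim L = p}"

definition orthonormal_basis :: "nat \<Rightarrow> (nat \<Rightarrow> 'a::euclidean_space) \<Rightarrow> 'a set \<Rightarrow> bool" where
  "orthonormal_basis m e S \<longleftrightarrow>
     (\<forall>i\<in>{1..m}. e i \<in> S) \<and>
     (\<forall>i\<in>{1..m}. \<forall>k\<in>{1..m}. e i \<bullet> e k = (if i = k then 1 else 0)) \<and>
     span (e ` {1..m}) = S"

definition is_singular_values :: "nat \<Rightarrow> (nat \<Rightarrow> nat \<Rightarrow> real) \<Rightarrow> (nat \<Rightarrow> real) \<Rightarrow> bool" where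
  "is_singular_values p C \<sigma> \<longleftrightarrow>
     (\<forall>j\<in>{1..p}. 0 \<le> \<sigma> j) \<and>
     (\<forall>j. 1 \<le> j \<and> j < p \<longrightarrow> \<sigma> (j + 1) \<le> \<sigma> j) \<and>
     (\<exists>U V :: nat \<Rightarrow> nat \<Rightarrow> real.
        (\<forall>i\<in>{1..p}. \<forall>l\<in>{1..p}. (\<Sum>k=1..p. U i k * U l k) = (if i = l then 1 else 0)) \<and>
        (\<forall>i\<in>{1..p}. \<forall>l\<in>{1..p}. (\<Sum>k=1..p. V i k * V l k) = (if i = l then 1 else 0)) \<and>
        (\<forall>i\<in>{1..p}. \<forall>k\<in>{1..p}. C i k = (\<Sum>l=1..p. U i l * \<sigma> l * V k l)))"

definition singular_value :: "nat \<Rightarrow> (nat \<Rightarrow> nat \<Rightarrow> real) \<Rightarrow> nat \<Rightarrow> real" where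
  "singular_value p C j = (SOME \<sigma>. is_singular_values p C \<sigma>) j"

definition jordan_angle :: "('a::euclidean_space) set \<Rightarrow> 'a set \<Rightarrow> nat \<Rightarrow> real" where
  "jordan_angle L M j =
     (let p = dim L;
          e = (SOME e. orthonormal_basis p e L);
          f = (SOME f. orthonormal_basis p f M)
      in arccos (singular_value p (\<lambda>i k. e i \<bullet> f k) j))"

definition smooth_on :: "real set \<Rightarrow> (real \<Rightarrow> 'a::real_normed_vector) \<Rightarrow> bool" where
  "smooth_on S g \<longleftrightarrow> (\<exists>D. D 0 = g \<and>
      (\<forall>k. \<forall>t\<in>S. (D k has_vector_derivative D (Suc k) t) (at t)))"

text \<open>Chart of the Grassmannian around M0: for |eps - eps0| < delta, Mc eps is the graph
  of the linear operator A eps : M0 -> M0^perp.\<close>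
definition graph_chart ::
  "'a::euclidean_space set \<Rightarrow> (real \<Rightarrow> 'a set) \<Rightarrow> real \<Rightarrow> real \<Rightarrow> (real \<Rightarrow> 'a \<Rightarrow> 'a) \<Rightarrow> bool" where
  "graph_chart M0 Mc eps0 \<delta> A \<longleftrightarrow>
     (\<forall>\<epsilon>. \<bar>\<epsilon> - eps0\<bar> < \<delta> \<longrightarrow>
        linear (A \<epsilon>) \<and> A \<epsilon> ` M0 \<subseteq> orthogonal_comp M0 \<and>
        Mc \<epsilon> = {x + A \<epsilon> x | x. x \<in> M0})"

definition smooth_Gr_curve :: "nat \<Rightarrow> nat \<Rightarrow> real set \<Rightarrow> (real \<Rightarrow> (real^'n::finite) set) \<Rightarrow> bool" where
  "smooth_Gr_curve p q I Mc \<longleftrightarrow>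
     open I \<and> (\<forall>\<epsilon>\<in>I. Mc \<epsilon> \<in> Gr p TYPE('n)) \<and>
     (\<forall>eps0\<in>I. \<exists>\<delta>>0. \<exists>A. graph_chart (Mc eps0) Mc eps0 \<delta> A \<and>
        (\<forall>x\<in>Mc eps0. smooth_on (ball eps0 \<delta>) (\<lambda>\<epsilon>. A \<epsilon> x)))"

text \<open>Tangent vector of the curve at 0: M'(0) = A'(0), for the chart A around M(0).\<close>
definition curve_derivative_at0 :: "(real \<Rightarrow> 'a::euclidean_space set) \<Rightarrow> ('a \<Rightarrow> 'a) \<Rightarrow> bool" where
  "curve_derivative_at0 Mc H \<longleftrightarrow>
     (\<exists>\<delta>>0. \<exists>A. graph_chart (Mc 0) Mc 0 \<delta> A \<and>
        (\<forall>x\<in>Mc 0. ((\<lambda>\<epsilon>. A \<epsilon> x) has_vector_derivative H x) (at 0)))"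

end

(*
  The cosines of the Jordan angles psi_j[L,K] are the singular values of the cross Gram matrix,
  i.e. cos^2 psi_j are the eigenvalues of the quadratic form x |-> |P_K x|^2 on L, governed by the
  Courant-Fischer min-max principle.  Near eps = 0 the subspace M(eps) is the graph of a small
  A(eps) : M -> M^perp, and |P_M(eps) x|^2 = |P_M x|^2 + 2 <x - P_M x, A(eps) P_M x> + O(|A(eps)|^2).
  At eps = 0 the form is diagonal in the principal basis e_j with the simple eigenvalues
  cos^2 psi_j; a perturbation argument around the spectral gap gives
    cos^2 psi_j(eps) = cos^2 psi_j + 2 <e_j - cos psi_j f_j, A(eps) (cos psi_j f_j)> + O(eps^2)
                     = cos^2 psi_j - 2 cos psi_j sin psi_j <r_j, A(eps) f_j> + O(eps^2),
  and differentiating psi_j = arccos (sqrt (cos^2 psi_j)) yields psi_j'(0) = <r_j, H f_j> = h_jj.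
*)
theory Submission
  imports Defs
begin

section \<open>Orthonormal families\<close>

definition orthonormal_family :: "nat \<Rightarrow> (nat \<Rightarrow> 'a::euclidean_space) \<Rightarrow> bool" where
  "orthonormal_family n v \<longleftrightarrow> (\<forall>i\<in>{1..n}. \<forall>k\<in>{1..n}. v i \<bullet> v k = (if i = k then 1 else 0))"

lemma orthonormal_familyI:
  assumes "\<And>i. i \<in> {1..n} \<Longrightarrow> norm (v i) = 1"
    and "\<And>i k. i \<in> {1..n} \<Longrightarrow> k \<in> {1..n} \<Longrightarrow> i < k \<Longrightarrow> v i \<bullet> v k = 0"
  shows "orthonormal_family n v"
  unfolding orthonormal_family_def
proof (intro ballI)
  fix i k assume i: "i \<in> {1..n}" and k: "k \<in> {1..n}"
  consider "i = k" | "i < k" | "k < i" by linarith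
  then show "v i \<bullet> v k = (if i = k then 1 else 0)"
  proof cases
    case 1
    then show ?thesis using assms(1)[OF i] by (simp add: dot_square_norm)
  next
    case 2
    then show ?thesis using assms(2)[OF i k] by simp
  next
    case 3
    then show ?thesis using assms(2)[OF k i] by (simp add: inner_commute)
  qed
qed

lemma orthonormal_family_norm:
  "orthonormal_family n v \<Longrightarrow> i \<in> {1..n} \<Longrightarrow> norm (v i) = 1"
  unfolding orthonormal_family_def by (simp add: norm_eq_sqrt_inner)

lemma orthonormal_family_prepend:
  assumes w0: "norm w0 = 1" and w: "orthonormal_family n w"
    and orth: "\<And>i. i \<in> {1..n} \<Longrightarrow> w0 \<bullet> w i = 0"
  shows "orthonormal_family (Suc n) (\<lambda>i. if i = 1 then w0 else w (i - 1))"
proof (rule orthonormal_familyI)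
  have shift: "i - 1 \<in> {1..n}" if "i \<in> {1..Suc n}" "i \<noteq> 1" for i
    using that by auto
  show "norm (if i = 1 then w0 else w (i - 1)) = 1" if "i \<in> {1..Suc n}" for i
    using w0 orthonormal_family_norm[OF w shift[OF that]] by simp
  fix i k assume i: "i \<in> {1..Suc n}" and k: "k \<in> {1..Suc n}" and ik: "i < k"
  show "(if i = 1 then w0 else w (i - 1)) \<bullet> (if k = 1 then w0 else w (k - 1)) = 0"
  proof (cases "i = 1")
    case True
    then show ?thesis using orth[OF shift[OF k]] ik by simp
  next
    case False
    then have "k \<noteq> 1" "w (i - 1) \<bullet> w (k - 1) = 0"
      using w shift[OF i] shift[OF k] ik unfolding orthonormal_family_def by auto
    then show ?thesis using False by simp
  qed
qed

lemma orthonormal_family_inner_sum: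
  assumes "orthonormal_family n v" and "k \<in> {1..n}"
  shows "(\<Sum>i=1..n. a i *\<^sub>R v i) \<bullet> v k = a k"
proof -
  have "(\<Sum>i=1..n. a i *\<^sub>R v i) \<bullet> v k = (\<Sum>i=1..n. if i = k then a k else 0)"
    unfolding inner_sum_left
    by (rule sum.cong) (use assms in \<open>auto simp: orthonormal_family_def\<close>)
  then show ?thesis
    using assms(2) by simp
qed

lemma orthonormal_family_norm_sum:
  assumes "orthonormal_family n v"
  shows "(norm (\<Sum>i=1..n. a i *\<^sub>R v i))\<^sup>2 = (\<Sum>i=1..n. (a i)\<^sup>2)"
proof -
  have "(norm (\<Sum>i=1..n. a i *\<^sub>R v i))\<^sup>2 = (\<Sum>k=1..n. a k * ((\<Sum>i=1..n. a i *\<^sub>R v i) \<bullet> v k))"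
    by (simp add: power2_norm_eq_inner inner_sum_right)
  also have "\<dots> = (\<Sum>k=1..n. (a k)\<^sup>2)"
    using orthonormal_family_inner_sum[OF assms] by (simp add: power2_eq_square)
  finally show ?thesis .
qed

lemma orthonormal_family_independent:
  assumes v: "orthonormal_family n v" and A: "A \<subseteq> {1..n}"
  shows "independent (v ` A)" and "card (v ` A) = card A"
proof -
  have vv: "v i \<bullet> v k = (if i = k then 1 else 0)" if "i \<in> A" "k \<in> A" for i k
    using v A that unfolding orthonormal_family_def by blast
  have "inj_on v A"
  proof (rule inj_onI)
    fix i k assume "i \<in> A" "k \<in> A" "v i = v k"
    then show "i = k" using vv[of i k] vv[of i i] by (auto split: if_splits)
  qed
  then show "card (v ` A) = card A"
    by (rule card_image)
  have "pairwise orthogonal (v ` A)"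
    unfolding pairwise_def orthogonal_def using vv by force
  moreover have "0 \<notin> v ` A"
    using vv by force
  ultimately show "independent (v ` A)"
    by (rule pairwise_orthogonal_independent)
qed

lemma dim_span_orthonormal_family:
  "orthonormal_family n v \<Longrightarrow> A \<subseteq> {1..n} \<Longrightarrow> dim (span (v ` A)) = card A"
  using orthonormal_family_independent dim_eq_card_independent by (metis dim_span)

lemma orthonormal_family_orthogonal_span:
  assumes "orthonormal_family n v" and "A \<subseteq> {1..n}" and "x \<in> span (v ` A)"
    and "l \<in> {1..n} - A"
  shows "x \<bullet> v l = 0"
proof -
  have "orthogonal (v l) (v i)" if "i \<in> A" for i
  proof -
    have "l \<noteq> i" "i \<in> {1..n}" using that assms(2,4) by auto
    then show ?thesis using assms(1,4) unfolding orthonormal_family_def orthogonal_def by simp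
  qed
  then have "orthogonal (v l) x"
    using orthogonal_to_span[OF assms(3)] by blast
  then show ?thesis
    by (simp add: orthogonal_def inner_commute)
qed

lemma orthonormal_family_expansion:
  assumes v: "orthonormal_family n v" and x: "x \<in> span (v ` {1..n})"
  shows "x = (\<Sum>i=1..n. (x \<bullet> v i) *\<^sub>R v i)"
proof -
  define y where "y = x - (\<Sum>i=1..n. (x \<bullet> v i) *\<^sub>R v i)"
  have y_span: "y \<in> span (v ` {1..n})"
    unfolding y_def by (intro span_diff x span_sum span_scale span_base) auto
  have "y \<bullet> v k = 0" if "k \<in> {1..n}" for k
    using orthonormal_family_inner_sum[OF v that] unfolding y_def by (simp add: inner_diff_left)
  then have "orthogonal y z" if "z \<in> v ` {1..n}" for z
    using that by (auto simp: orthogonal_def)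
  then have "orthogonal y y"
    by (rule orthogonal_to_span[OF y_span])
  then show ?thesis
    unfolding y_def by (simp add: orthogonal_def)
qed

lemma span_orthonormal_family:
  assumes "orthonormal_family n v" and "\<forall>i\<in>{1..n}. v i \<in> S" and "subspace S" and "dim S = n"
  shows "span (v ` {1..n}) = S"
proof (rule span_subspace)
  show "v ` {1..n} \<subseteq> S" using assms(2) by auto
  show "S \<subseteq> span (v ` {1..n})"
    using card_ge_dim_independent[of "v ` {1..n}" S] orthonormal_family_independent[OF assms(1)] assms
    by auto
qed fact

lemma orthonormal_basisI:
  "orthonormal_family n v \<Longrightarrow> \<forall>i\<in>{1..n}. v i \<in> S \<Longrightarrow> subspace S \<Longrightarrow> dim S = n
    \<Longrightarrow> orthonormal_basis n v S"
  using span_orthonormal_family unfolding orthonormal_basis_def orthonormal_family_def by blast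

lemma orthonormal_basis_family: "orthonormal_basis n v S \<Longrightarrow> orthonormal_family n v"
  unfolding orthonormal_basis_def orthonormal_family_def by auto

lemma orthonormal_basis_mem: "orthonormal_basis n v S \<Longrightarrow> i \<in> {1..n} \<Longrightarrow> v i \<in> S"
  unfolding orthonormal_basis_def by auto

lemma orthonormal_basis_expansion:
  "orthonormal_basis n v S \<Longrightarrow> x \<in> S \<Longrightarrow> x = (\<Sum>i=1..n. (x \<bullet> v i) *\<^sub>R v i)"
  using orthonormal_family_expansion orthonormal_basis_family unfolding orthonormal_basis_def by blast

lemma orthonormal_basis_parseval:
  assumes "orthonormal_basis n v S" and "x \<in> S"
  shows "x \<bullet> y = (\<Sum>i=1..n. (x \<bullet> v i) * (y \<bullet> v i))"
proof -
  have "x \<bullet> y = (\<Sum>i=1..n. (x \<bullet> v i) *\<^sub>R v i) \<bullet> y"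
    using orthonormal_basis_expansion[OF assms] by simp
  also have "\<dots> = (\<Sum>i=1..n. (x \<bullet> v i) * (y \<bullet> v i))"
    unfolding inner_sum_left by (rule sum.cong) (simp_all add: inner_commute)
  finally show ?thesis .
qed

lemma unit_vector_orthogonal_exists:
  fixes S :: "'a::euclidean_space set"
  assumes S: "subspace S" and B: "B \<subseteq> S" "finite B" and card: "card B < dim S"
  shows "\<exists>z\<in>S. norm z = 1 \<and> (\<forall>b\<in>B. z \<bullet> b = 0)"
proof -
  have "span B \<noteq> span S"
  proof
    assume "span B = span S"
    then have "dim B = dim S"
      by (metis dim_span)
    then show False
      using dim_le_card'[OF B(2)] card by simp
  qed
  then have "span B \<subset> span S"
    using span_mono[OF B(1)] by blast
  then obtain x where x: "x \<noteq> 0" "x \<in> span S" "\<And>y. y \<in> span B \<Longrightarrow> orthogonal x y"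
    using orthogonal_to_subspace_exists_gen by blast
  have "x /\<^sub>R norm x \<in> S"
    using x(2) S span_eq_iff[of S] subspace_scale by metis
  moreover have "(x /\<^sub>R norm x) \<bullet> b = 0" if "b \<in> B" for b
    using x(3)[OF span_base[OF that]] by (simp add: orthogonal_def)
  ultimately show ?thesis
    using x(1) by (intro bexI[of _ "x /\<^sub>R norm x"]) auto
qed

lemma orthonormal_family_extend:
  fixes y :: "nat \<Rightarrow> 'a::euclidean_space"
  assumes S: "subspace S" "dim S = n" and J: "J \<subseteq> {1..n}"
    and orth: "\<forall>i\<in>J. \<forall>k\<in>J. y i \<bullet> y k = (if i = k then 1 else 0)" and yS: "\<forall>i\<in>J. y i \<in> S"
  shows "\<exists>y'. orthonormal_family n y' \<and> (\<forall>i\<in>{1..n}. y' i \<in> S) \<and> (\<forall>i\<in>J. y' i = y i)"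
  using J orth yS
proof (induction "card ({1..n} - J)" arbitrary: J y)
  case 0
  then have "J = {1..n}" by auto
  with 0 show ?case
    unfolding orthonormal_family_def by blast
next
  case (Suc m)
  have finJ: "finite J"
    using Suc.prems(1) finite_subset by blast
  have missing: "card ({1..n} - J) = n - card J"
    using Suc.prems(1) finJ by (simp add: card_Diff_subset)
  have "{1..n} - J \<noteq> {}"
    using Suc.hyps(2) by (metis card.empty Zero_neq_Suc)
  then obtain i0 where i0: "i0 \<in> {1..n}" "i0 \<notin> J"
    by blast
  have "card (y ` J) < dim S"
    using card_image_le[OF finJ, of y] missing Suc.hyps(2) S(2) by linarith
  then obtain z where z: "z \<in> S" "norm z = 1" "\<forall>k\<in>J. z \<bullet> y k = 0"
    using unit_vector_orthogonal_exists[OF S(1), of "y ` J"] Suc.prems(3) finJ by auto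
  define y2 where "y2 = y(i0 := z)"
  have "{1..n} - insert i0 J = ({1..n} - J) - {i0}"
    by auto
  then have m: "m = card ({1..n} - insert i0 J)"
    using Suc.hyps(2) i0 by simp
  have J2: "insert i0 J \<subseteq> {1..n}"
    using Suc.prems(1) i0 by simp
  have "z \<bullet> z = 1"
    using z(2) norm_eq_1 by blast
  then have orth2: "\<forall>i\<in>insert i0 J. \<forall>k\<in>insert i0 J. y2 i \<bullet> y2 k = (if i = k then 1 else 0)"
    using Suc.prems(2) z(3) i0(2) unfolding y2_def by (auto simp: inner_commute)
  have S2: "\<forall>i\<in>insert i0 J. y2 i \<in> S"
    using Suc.prems(3) z(1) unfolding y2_def by simp
  obtain y' where "orthonormal_family n y'" "\<forall>i\<in>{1..n}. y' i \<in> S" "\<forall>i\<in>insert i0 J. y' i = y2 i"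
    using Suc.hyps(1)[OF m J2 orth2 S2] by blast
  then show ?case
    using i0(2) unfolding y2_def by (intro exI[of _ y']) auto
qed

lemma orthonormal_basis_exists:
  fixes S :: "'a::euclidean_space set"
  shows "subspace S \<Longrightarrow> dim S = n \<Longrightarrow> \<exists>v. orthonormal_basis n v S"
  using orthonormal_family_extend[of S n "{}"] orthonormal_basisI by blast

definition onb_proj :: "nat \<Rightarrow> (nat \<Rightarrow> 'a::euclidean_space) \<Rightarrow> 'a \<Rightarrow> 'a" where
  "onb_proj n g x = (\<Sum>k=1..n. (x \<bullet> g k) *\<^sub>R g k)"

lemma linear_onb_proj: "linear (onb_proj n g)"
  unfolding onb_proj_def
  by (rule linearI) (simp_all add: inner_add_left scaleR_add_left sum.distrib scaleR_sum_right)

lemma onb_proj_mem: "orthonormal_basis n g K \<Longrightarrow> subspace K \<Longrightarrow> onb_proj n g x \<in> K"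
  unfolding onb_proj_def by (intro subspace_sum subspace_scale) (auto dest: orthonormal_basis_mem)

lemma inner_onb_proj:
  assumes "orthonormal_basis n g K" and "y \<in> K"
  shows "onb_proj n g x \<bullet> y = x \<bullet> y"
proof -
  have "onb_proj n g x \<bullet> y = (\<Sum>k=1..n. (y \<bullet> g k) * (x \<bullet> g k))"
    unfolding onb_proj_def inner_sum_left by (rule sum.cong) (simp_all add: inner_commute)
  also have "\<dots> = y \<bullet> x"
    using orthonormal_basis_parseval[OF assms, of x] by simp
  finally show ?thesis
    by (simp add: inner_commute)
qed

lemma inner_diff_onb_proj:
  assumes "orthonormal_basis n g K" and "y \<in> K"
  shows "(x - onb_proj n g x) \<bullet> y = 0"
  using inner_onb_proj[OF assms, of x] by (simp add: inner_diff_left)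

lemma norm_onb_proj_sq:
  assumes "orthonormal_basis n g K" and "subspace K"
  shows "(norm (onb_proj n g x))\<^sup>2 = x \<bullet> onb_proj n g x"
  using inner_onb_proj[OF assms(1) onb_proj_mem[OF assms]]
  by (simp add: power2_norm_eq_inner inner_commute)

lemma norm_onb_proj_sq_expansion:
  "orthonormal_basis n g K \<Longrightarrow> (norm (onb_proj n g x))\<^sup>2 = (\<Sum>k=1..n. (x \<bullet> g k)\<^sup>2)"
  unfolding onb_proj_def by (rule orthonormal_family_norm_sum[OF orthonormal_basis_family])

lemma pythagoras_onb_proj:
  assumes "orthonormal_basis n g K" and "subspace K"
  shows "(norm x)\<^sup>2 = (norm (onb_proj n g x))\<^sup>2 + (norm (x - onb_proj n g x))\<^sup>2"
proof -
  have "(x - onb_proj n g x) \<bullet> onb_proj n g x = 0"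
    by (rule inner_diff_onb_proj[OF assms(1) onb_proj_mem[OF assms]])
  then show ?thesis
    using norm_onb_proj_sq[OF assms]
    by (simp add: power2_norm_eq_inner inner_diff_left inner_diff_right inner_commute)
qed

lemma norm_onb_proj_le:
  assumes "orthonormal_basis n g K" and "subspace K"
  shows "norm (onb_proj n g x) \<le> norm x"
proof (rule power2_le_imp_le)
  show "(norm (onb_proj n g x))\<^sup>2 \<le> (norm x)\<^sup>2"
    using pythagoras_onb_proj[OF assms, of x] by simp
qed simp

lemma norm_diff_onb_proj_le:
  assumes "orthonormal_basis n g K" and "subspace K"
  shows "norm (x - onb_proj n g x) \<le> norm x"
proof (rule power2_le_imp_le)
  show "(norm (x - onb_proj n g x))\<^sup>2 \<le> (norm x)\<^sup>2"
    using pythagoras_onb_proj[OF assms, of x] by simp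
qed simp

section \<open>Singular values and the min-max principle\<close>

lemma quadratic_bound_imp_zero:
  fixes c K :: real
  assumes bound: "\<And>t. 2 * t * c \<le> t\<^sup>2 * K" and K: "K \<ge> 0"
  shows "c = 0"
proof (rule ccontr)
  assume "c \<noteq> 0"
  then have cc: "c * c > 0"
    by (metis not_real_square_gt_zero)
  define t where "t = c / (K + 1)"
  have tK: "t * (K + 1) = c"
    unfolding t_def using K by simp
  have "2 * t * c * (K + 1)\<^sup>2 \<le> t\<^sup>2 * K * (K + 1)\<^sup>2"
    using bound[of t] by (rule mult_right_mono) simp
  then have "(c * c) * (2 * (K + 1)) \<le> (c * c) * K"
    unfolding tK[symmetric] by (simp add: power2_eq_square algebra_simps)
  then have "2 * (K + 1) \<le> K"
    using cc by (rule mult_left_le_imp_le)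
  then show False
    using K by simp
qed

lemma orthogonal_image_at_maximizer:
  fixes T :: "'a::real_inner \<Rightarrow> 'b::real_inner"
  assumes T: "linear T" and w: "norm w = 1" "w \<bullet> v = 0"
    and max: "\<And>t::real. norm (T (w + t *\<^sub>R v)) \<le> norm (T w) * norm (w + t *\<^sub>R v)"
  shows "T w \<bullet> T v = 0"
proof (rule quadratic_bound_imp_zero)
  fix t :: real
  let ?M = "norm (T w)"
  have "(norm (T (w + t *\<^sub>R v)))\<^sup>2 \<le> (?M * norm (w + t *\<^sub>R v))\<^sup>2"
    using max[of t] by (intro power_mono) auto
  moreover have "(norm (T (w + t *\<^sub>R v)))\<^sup>2 = ?M\<^sup>2 + 2 * t * (T w \<bullet> T v) + t\<^sup>2 * (T v \<bullet> T v)"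
    unfolding power2_norm_eq_inner linear_add[OF T] linear_scale[OF T]
    by (simp add: inner_add_left inner_add_right inner_commute power2_eq_square algebra_simps)
  moreover have "(norm (w + t *\<^sub>R v))\<^sup>2 = 1 + t\<^sup>2 * (v \<bullet> v)"
    using w unfolding power2_norm_eq_inner norm_eq_1
    by (simp add: inner_add_left inner_add_right inner_commute power2_eq_square)
  ultimately have "2 * t * (T w \<bullet> T v) \<le> t\<^sup>2 * (?M\<^sup>2 * (v \<bullet> v)) - t\<^sup>2 * (T v \<bullet> T v)"
    by (simp add: power_mult_distrib algebra_simps)
  also have "\<dots> \<le> t\<^sup>2 * (?M\<^sup>2 * (v \<bullet> v))"
    by simp
  finally show "2 * t * (T w \<bullet> T v) \<le> t\<^sup>2 * (?M\<^sup>2 * (v \<bullet> v))" .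
qed simp

lemma norm_image_maximizer_exists:
  fixes T :: "'a::euclidean_space \<Rightarrow> 'b::real_normed_vector"
  assumes T: "linear T" and S: "subspace S" "S \<noteq> {0}"
  obtains w where "w \<in> S" "norm w = 1" "\<And>x. x \<in> S \<Longrightarrow> norm (T x) \<le> norm (T w) * norm x"
proof -
  let ?B = "sphere 0 1 \<inter> S"
  have "compact ?B"
    using closed_subspace[OF S(1)] by (intro compact_Int_closed) auto
  moreover obtain u where u: "u \<in> S" "u \<noteq> 0"
    using S subspace_0 by blast
  then have "u /\<^sub>R norm u \<in> ?B"
    using S(1) by (simp add: subspace_scale)
  then have "?B \<noteq> {}"
    by blast
  moreover have "continuous_on ?B (\<lambda>x. norm (T x))"
    using T by (intro continuous_on_norm linear_continuous_on linear_conv_bounded_linear[THEN iffD1])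
  ultimately obtain w where w: "w \<in> ?B" and wmax: "\<And>y. y \<in> ?B \<Longrightarrow> norm (T y) \<le> norm (T w)"
    using continuous_attains_sup by metis
  have "norm (T x) \<le> norm (T w) * norm x" if x: "x \<in> S" for x
  proof (cases "x = 0")
    case True
    then show ?thesis using linear_0[OF T] by simp
  next
    case False
    then have "norm (T (x /\<^sub>R norm x)) \<le> norm (T w)"
      using x S(1) by (intro wmax) (simp add: subspace_scale)
    then show ?thesis
      using False by (simp add: linear_scale[OF T] field_simps)
  qed
  then show ?thesis
    using w that by auto
qed

lemma dim_Int_hyperplane:
  fixes w :: "'a::euclidean_space"
  assumes S: "subspace S" "dim S = Suc n" and w: "w \<noteq> 0" "w \<in> S"
  shows "dim (S \<inter> {x. w \<bullet> x = 0}) = n"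
proof -
  let ?H = "{x. w \<bullet> x = 0}"
  have "z \<in> {x + y |x y. x \<in> S \<and> y \<in> ?H}" for z
  proof -
    let ?a = "((z \<bullet> w) / (w \<bullet> w)) *\<^sub>R w"
    have "?a \<in> S" "z - ?a \<in> ?H" "z = ?a + (z - ?a)"
      using w S(1) by (simp_all add: subspace_scale inner_diff_right inner_commute)
    then show ?thesis
      by blast
  qed
  then have "{x + y |x y. x \<in> S \<and> y \<in> ?H} = UNIV"
    by blast
  moreover have "dim {x + y |x y. x \<in> S \<and> y \<in> ?H} + dim (S \<inter> ?H) = dim S + dim ?H"
    using S(1) subspace_hyperplane by (rule dim_sums_Int)
  ultimately have "DIM('a) + dim (S \<inter> ?H) = Suc n + (DIM('a) - 1)"
    using S(2) dim_hyperplane[OF w(1)] by simp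
  then show ?thesis
    using DIM_positive[where 'a='a] by linarith
qed

text \<open>The right singular vectors of \<open>T\<close> on \<open>S\<close>, obtained by successively maximizing
  \<open>norm (T x)\<close> over unit vectors orthogonal to the previously chosen ones.\<close>
lemma orthonormal_family_orthogonal_images:
  fixes T :: "'a::euclidean_space \<Rightarrow> 'b::real_inner"
  assumes T: "linear T"
  shows "subspace S \<Longrightarrow> dim S = n \<Longrightarrow> \<exists>w. orthonormal_family n w \<and> (\<forall>i\<in>{1..n}. w i \<in> S) \<and>
     (\<forall>a\<in>{1..n}. \<forall>b\<in>{1..n}. a < b \<longrightarrow>
        T (w a) \<bullet> T (w b) = 0 \<and> norm (T (w b)) \<le> norm (T (w a)))"
proof (induction n arbitrary: S)
  case 0
  show ?case
    by (intro exI[of _ "\<lambda>_. 0"]) (auto simp: orthonormal_family_def)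
next
  case (Suc n)
  have "S \<noteq> {0}"
    using Suc.prems(2) dim_eq_0[of S] by auto
  then obtain w0 where w0: "w0 \<in> S" "norm w0 = 1"
    and max: "\<And>x. x \<in> S \<Longrightarrow> norm (T x) \<le> norm (T w0) * norm x"
    using norm_image_maximizer_exists[OF T Suc.prems(1)] by blast
  define S' where "S' = S \<inter> {x. w0 \<bullet> x = 0}"
  have "subspace S'"
    unfolding S'_def by (intro subspace_inter Suc.prems(1) subspace_hyperplane)
  moreover have "dim S' = n"
    unfolding S'_def using w0 by (intro dim_Int_hyperplane Suc.prems) auto
  ultimately obtain w' where w': "orthonormal_family n w'" "\<forall>i\<in>{1..n}. w' i \<in> S'"
    and w'T: "\<forall>a\<in>{1..n}. \<forall>b\<in>{1..n}. a < b \<longrightarrow>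
        T (w' a) \<bullet> T (w' b) = 0 \<and> norm (T (w' b)) \<le> norm (T (w' a))"
    using Suc.IH by blast
  have w'S: "w' i \<in> S" "w0 \<bullet> w' i = 0" "norm (w' i) = 1" if "i \<in> {1..n}" for i
    using w' that orthonormal_family_norm[OF w'(1)] unfolding S'_def by auto
  have T0: "T w0 \<bullet> T (w' i) = 0" if "i \<in> {1..n}" for i
  proof (rule orthogonal_image_at_maximizer[OF T w0(2) w'S(2)[OF that]])
    fix t :: real
    show "norm (T (w0 + t *\<^sub>R w' i)) \<le> norm (T w0) * norm (w0 + t *\<^sub>R w' i)"
      using w0(1) w'S(1)[OF that] Suc.prems(1) by (intro max) (simp add: subspace_add subspace_scale)
  qed
  define w where "w i = (if i = 1 then w0 else w' (i - 1))" for i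
  have shift: "i - 1 \<in> {1..n}" if "i \<in> {1..Suc n}" "i \<noteq> 1" for i
    using that by auto
  have "orthonormal_family (Suc n) w"
    unfolding w_def using w0(2) w'(1) w'S(2) by (rule orthonormal_family_prepend)
  moreover have "\<forall>i\<in>{1..Suc n}. w i \<in> S"
    using w0(1) w'S(1)[OF shift] unfolding w_def by simp
  moreover have "T (w a) \<bullet> T (w b) = 0 \<and> norm (T (w b)) \<le> norm (T (w a))"
    if a: "a \<in> {1..Suc n}" and b: "b \<in> {1..Suc n}" and ab: "a < b" for a b
  proof (cases "a = 1")
    case True
    then show ?thesis
      using T0[OF shift[OF b]] max[OF w'S(1)[OF shift[OF b]]] w'S(3)[OF shift[OF b]] ab
      unfolding w_def by simp
  next
    case False
    then show ?thesis
      using w'T shift[OF a] shift[OF b] ab unfolding w_def by auto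
  qed
  ultimately show ?case
    by blast
qed

lemma antimono_on_interval:
  fixes \<sigma> :: "nat \<Rightarrow> real"
  assumes step: "\<forall>j. 1 \<le> j \<and> j < p \<longrightarrow> \<sigma> (j + 1) \<le> \<sigma> j"
    and ab: "1 \<le> a" "a \<le> b" "b \<le> p"
  shows "\<sigma> b \<le> \<sigma> a"
  using ab(2,3)
proof (induction b rule: dec_induct)
  case (step n)
  have "\<sigma> (n + 1) \<le> \<sigma> n"
    using assms(1) ab(1) step.hyps step.prems by simp
  then show ?case
    using step by simp
qed simp

lemma orthonormal_rows_inner_basis:
  assumes w: "orthonormal_basis p w L" and e: "orthonormal_basis p e L"
  shows "\<forall>i\<in>{1..p}. \<forall>l\<in>{1..p}. (\<Sum>k=1..p. (e i \<bullet> w k) * (e l \<bullet> w k)) = (if i = l then 1 else 0)"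
  using orthonormal_basis_parseval[OF w orthonormal_basis_mem[OF e]] orthonormal_basis_family[OF e]
  unfolding orthonormal_family_def by simp

lemma orthonormal_family_combination:
  assumes e: "orthonormal_family p e"
    and U: "\<forall>l\<in>{1..p}. \<forall>m\<in>{1..p}. (\<Sum>i=1..p. U i l * U i m) = (if l = m then 1 else 0)"
  shows "orthonormal_family p (\<lambda>l. \<Sum>i=1..p. U i l *\<^sub>R e i)"
  unfolding orthonormal_family_def
proof (intro ballI)
  fix l m assume lm: "l \<in> {1..p}" "m \<in> {1..p}"
  have "(\<Sum>i=1..p. U i l *\<^sub>R e i) \<bullet> (\<Sum>i=1..p. U i m *\<^sub>R e i)
      = (\<Sum>i=1..p. U i l * ((\<Sum>i=1..p. U i m *\<^sub>R e i) \<bullet> e i))"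
    by (simp add: inner_sum_left inner_commute)
  also have "\<dots> = (\<Sum>i=1..p. U i l * U i m)"
    using orthonormal_family_inner_sum[OF e] by (intro sum.cong) simp_all
  finally show "(\<Sum>i=1..p. U i l *\<^sub>R e i) \<bullet> (\<Sum>i=1..p. U i m *\<^sub>R e i) = (if l = m then 1 else 0)"
    using U lm by simp
qed

lemma orthonormal_basis_normalizing_images:
  fixes T :: "'a::euclidean_space \<Rightarrow> 'a"
  assumes K: "subspace K" "dim K = p" and TK: "\<And>x. T x \<in> K"
    and orth: "\<And>a b. a \<in> {1..p} \<Longrightarrow> b \<in> {1..p} \<Longrightarrow> a \<noteq> b \<Longrightarrow> T (w a) \<bullet> T (w b) = 0"
  obtains y where "orthonormal_basis p y K" "\<And>l. l \<in> {1..p} \<Longrightarrow> T (w l) = norm (T (w l)) *\<^sub>R y l"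
proof -
  define J where "J = {l\<in>{1..p}. T (w l) \<noteq> 0}"
  have "(T (w i) /\<^sub>R norm (T (w i))) \<bullet> (T (w k) /\<^sub>R norm (T (w k))) = (if i = k then 1 else 0)"
    if "i \<in> J" "k \<in> J" for i k
  proof (cases "i = k")
    case True
    then show ?thesis
      using that unfolding J_def by (simp add: dot_square_norm power2_eq_square)
  next
    case False
    then show ?thesis
      using orth[of i k] that unfolding J_def by simp
  qed
  then have "\<forall>i\<in>J. \<forall>k\<in>J. (T (w i) /\<^sub>R norm (T (w i))) \<bullet> (T (w k) /\<^sub>R norm (T (w k))) = (if i = k then 1 else 0)"
    by blast
  moreover have "\<forall>i\<in>J. T (w i) /\<^sub>R norm (T (w i)) \<in> K"
    using TK K(1) by (simp add: subspace_scale)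
  ultimately obtain y where y: "orthonormal_family p y" "\<forall>i\<in>{1..p}. y i \<in> K"
    and yJ: "\<forall>i\<in>J. y i = T (w i) /\<^sub>R norm (T (w i))"
    using orthonormal_family_extend[OF K _, of J "\<lambda>l. T (w l) /\<^sub>R norm (T (w l))"] unfolding J_def by blast
  have "T (w l) = norm (T (w l)) *\<^sub>R y l" if "l \<in> {1..p}" for l
    using yJ that unfolding J_def by (cases "T (w l) = 0") auto
  then show ?thesis
    using that orthonormal_basisI[OF y K] by blast
qed

lemma singular_values_exist:
  fixes e g :: "nat \<Rightarrow> 'a::euclidean_space"
  assumes L: "subspace L" "dim L = p" and e: "orthonormal_basis p e L"
    and K: "subspace K" "dim K = p" and g: "orthonormal_basis p g K"
  shows "\<exists>\<sigma>. is_singular_values p (\<lambda>i k. e i \<bullet> g k) \<sigma>"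
proof -
  let ?P = "onb_proj p g"
  obtain w where w: "orthonormal_family p w" "\<forall>i\<in>{1..p}. w i \<in> L"
    and wP: "\<forall>a\<in>{1..p}. \<forall>b\<in>{1..p}. a < b \<longrightarrow>
        ?P (w a) \<bullet> ?P (w b) = 0 \<and> norm (?P (w b)) \<le> norm (?P (w a))"
    using orthonormal_family_orthogonal_images[OF linear_onb_proj L] by blast
  have wb: "orthonormal_basis p w L"
    using orthonormal_basisI[OF w L] .
  define \<sigma> where "\<sigma> l = norm (?P (w l))" for l
  have "?P (w a) \<bullet> ?P (w b) = 0" if a: "a \<in> {1..p}" and b: "b \<in> {1..p}" and ne: "a \<noteq> b" for a b
  proof -
    consider "a < b" | "b < a"
      using ne by linarith
    then show ?thesis
    proof cases
      case 2
      then have "?P (w b) \<bullet> ?P (w a) = 0"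
        using wP a b by blast
      then show ?thesis
        by (simp add: inner_commute)
    qed (use wP a b in blast)
  qed
  then obtain y where yb: "orthonormal_basis p y K" and Pw: "\<And>l. l \<in> {1..p} \<Longrightarrow> ?P (w l) = \<sigma> l *\<^sub>R y l"
    unfolding \<sigma>_def
    using orthonormal_basis_normalizing_images[where T="onb_proj p g" and w=w, OF K onb_proj_mem[OF g K(1)]]
    by blast
  have "e i \<bullet> g k = (\<Sum>l=1..p. (e i \<bullet> w l) * \<sigma> l * (g k \<bullet> y l))"
    if "i \<in> {1..p}" "k \<in> {1..p}" for i k
  proof -
    have "e i \<bullet> g k = (\<Sum>l=1..p. (e i \<bullet> w l) * (g k \<bullet> w l))"
      using orthonormal_basis_parseval[OF wb orthonormal_basis_mem[OF e that(1)]] .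
    also have "\<dots> = (\<Sum>l=1..p. (e i \<bullet> w l) * \<sigma> l * (g k \<bullet> y l))"
    proof (rule sum.cong)
      fix l assume l: "l \<in> {1..p}"
      have "g k \<bullet> w l = ?P (w l) \<bullet> g k"
        using inner_onb_proj[OF g orthonormal_basis_mem[OF g that(2)]] by (simp add: inner_commute)
      then show "(e i \<bullet> w l) * (g k \<bullet> w l) = (e i \<bullet> w l) * \<sigma> l * (g k \<bullet> y l)"
        by (simp add: Pw[OF l] inner_commute)
    qed simp
    finally show ?thesis .
  qed
  moreover have "\<forall>j. 1 \<le> j \<and> j < p \<longrightarrow> \<sigma> (j + 1) \<le> \<sigma> j"
    using wP unfolding \<sigma>_def by auto
  ultimately have "is_singular_values p (\<lambda>i k. e i \<bullet> g k) \<sigma>"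
    unfolding is_singular_values_def
    using orthonormal_rows_inner_basis[OF wb e] orthonormal_rows_inner_basis[OF yb g]
    by (intro conjI exI[of _ "\<lambda>i l. e i \<bullet> w l"] exI[of _ "\<lambda>k l. g k \<bullet> y l"]) (auto simp: \<sigma>_def)
  then show ?thesis
    by blast
qed

text \<open>A square matrix with orthonormal rows has orthonormal columns; the ambient \<open>L\<close> only
  serves as a model of \<open>\<real>\<^sup>p\<close>.\<close>
lemma orthonormal_columns_if_orthonormal_rows:
  fixes e :: "nat \<Rightarrow> 'a::euclidean_space" and U :: "nat \<Rightarrow> nat \<Rightarrow> real"
  assumes L: "subspace L" "dim L = p" and e: "orthonormal_basis p e L"
    and U: "\<forall>i\<in>{1..p}. \<forall>l\<in>{1..p}. (\<Sum>k=1..p. U i k * U l k) = (if i = l then 1 else 0)"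
  shows "\<forall>k\<in>{1..p}. \<forall>m\<in>{1..p}. (\<Sum>i=1..p. U i k * U i m) = (if k = m then 1 else 0)"
proof (intro ballI)
  fix k m assume k: "k \<in> {1..p}" and m: "m \<in> {1..p}"
  have eo: "orthonormal_family p e"
    using orthonormal_basis_family[OF e] .
  define \<rho> where "\<rho> i = (\<Sum>k'=1..p. U i k' *\<^sub>R e k')" for i
  have \<rho>e: "\<rho> i \<bullet> e k' = U i k'" if "k' \<in> {1..p}" for i k'
    unfolding \<rho>_def by (rule orthonormal_family_inner_sum[OF eo that])
  have "orthonormal_family p \<rho>"
    unfolding \<rho>_def using orthonormal_family_combination[OF eo, of "\<lambda>k i. U i k"] U by simp
  moreover have "\<forall>i\<in>{1..p}. \<rho> i \<in> L"
    unfolding \<rho>_def using L(1) orthonormal_basis_mem[OF e] by (auto intro!: subspace_sum subspace_scale)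
  ultimately have \<rho>b: "orthonormal_basis p \<rho> L"
    using orthonormal_basisI L by blast
  have "e k \<bullet> e m = (\<Sum>i=1..p. U i k * U i m)"
    using orthonormal_basis_parseval[OF \<rho>b orthonormal_basis_mem[OF e k], of "e m"] \<rho>e k m
    by (simp add: inner_commute)
  then show "(\<Sum>i=1..p. U i k * U i m) = (if k = m then 1 else 0)"
    using eo k m unfolding orthonormal_family_def by simp
qed

lemma unit_vector_in_Int_subspaces:
  fixes L :: "'a::euclidean_space set"
  assumes S: "subspace S" "S \<subseteq> L" and W: "subspace W" "W \<subseteq> L" and L: "subspace L"
    and dim: "dim L < dim S + dim W"
  shows "\<exists>x\<in>S \<inter> W. norm x = 1"
proof -
  have "{x + y |x y. x \<in> S \<and> y \<in> W} \<subseteq> L"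
    using S W subspace_add[OF L] by blast
  then have "dim {x + y |x y. x \<in> S \<and> y \<in> W} \<le> dim L"
    by (rule dim_subset)
  then have "dim (S \<inter> W) \<noteq> 0"
    using dim_sums_Int[OF S(1) W(1)] dim by linarith
  then have "\<not> S \<inter> W \<subseteq> {0}"
    using dim_eq_0[of "S \<inter> W"] by simp
  then obtain x where x: "x \<in> S \<inter> W" "x \<noteq> 0"
    by blast
  then have "x /\<^sub>R norm x \<in> S \<inter> W"
    using S(1) W(1) by (simp add: subspace_scale)
  then show ?thesis
    using x(2) by (intro bexI[of _ "x /\<^sub>R norm x"]) auto
qed

context
  fixes L K :: "'a::euclidean_space set" and p :: nat and e g :: "nat \<Rightarrow> 'a" and \<sigma> :: "nat \<Rightarrow> real"
  assumes L: "subspace L" "dim L = p" and e: "orthonormal_basis p e L"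
    and K: "subspace K" "dim K = p" and g: "orthonormal_basis p g K"
    and sv: "is_singular_values p (\<lambda>i k. e i \<bullet> g k) \<sigma>"
begin

lemma singular_values_nonneg: "j \<in> {1..p} \<Longrightarrow> 0 \<le> \<sigma> j"
  using sv unfolding is_singular_values_def by blast

lemma singular_values_antimono: "1 \<le> a \<Longrightarrow> a \<le> b \<Longrightarrow> b \<le> p \<Longrightarrow> \<sigma> b \<le> \<sigma> a"
  using sv antimono_on_interval unfolding is_singular_values_def by blast

lemma norm_onb_proj_sq_singular_values:
  obtains w where "orthonormal_basis p w L"
    "\<And>x. x \<in> L \<Longrightarrow> (norm (onb_proj p g x))\<^sup>2 = (\<Sum>l=1..p. (x \<bullet> w l)\<^sup>2 * (\<sigma> l)\<^sup>2)"
proof -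
  obtain U V :: "nat \<Rightarrow> nat \<Rightarrow> real" where
    U: "\<forall>i\<in>{1..p}. \<forall>l\<in>{1..p}. (\<Sum>k=1..p. U i k * U l k) = (if i = l then 1 else 0)" and
    V: "\<forall>i\<in>{1..p}. \<forall>l\<in>{1..p}. (\<Sum>k=1..p. V i k * V l k) = (if i = l then 1 else 0)" and
    C: "\<forall>i\<in>{1..p}. \<forall>k\<in>{1..p}. e i \<bullet> g k = (\<Sum>l=1..p. U i l * \<sigma> l * V k l)"
    using sv unfolding is_singular_values_def by auto
  have Uc: "\<forall>k\<in>{1..p}. \<forall>m\<in>{1..p}. (\<Sum>i=1..p. U i k * U i m) = (if k = m then 1 else 0)"
    by (rule orthonormal_columns_if_orthonormal_rows[OF L e U])
  have Vc: "\<forall>k\<in>{1..p}. \<forall>m\<in>{1..p}. (\<Sum>i=1..p. V i k * V i m) = (if k = m then 1 else 0)"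
    by (rule orthonormal_columns_if_orthonormal_rows[OF K g V])
  define w where "w l = (\<Sum>i=1..p. U i l *\<^sub>R e i)" for l
  define z where "z l = (\<Sum>k=1..p. V k l *\<^sub>R g k)" for l
  have "orthonormal_family p w"
    unfolding w_def by (rule orthonormal_family_combination[OF orthonormal_basis_family[OF e] Uc])
  moreover have "\<forall>l\<in>{1..p}. w l \<in> L"
    unfolding w_def using L(1) orthonormal_basis_mem[OF e] by (auto intro!: subspace_sum subspace_scale)
  ultimately have wb: "orthonormal_basis p w L"
    using orthonormal_basisI L by blast
  have zo: "orthonormal_family p z"
    unfolding z_def by (rule orthonormal_family_combination[OF orthonormal_basis_family[OF g] Vc])
  have "w l \<bullet> g k = \<sigma> l * V k l" if l: "l \<in> {1..p}" and k: "k \<in> {1..p}" for l k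
  proof -
    have "w l \<bullet> g k = (\<Sum>i=1..p. U i l * (\<Sum>n=1..p. U i n * (\<sigma> n * V k n)))"
      unfolding w_def inner_sum_left using C k by (simp add: mult.assoc)
    also have "\<dots> = (\<Sum>n=1..p. (\<Sum>i=1..p. U i l * U i n) * (\<sigma> n * V k n))"
      by (simp add: sum_distrib_left sum_distrib_right mult.assoc) (rule sum.swap)
    also have "\<dots> = (\<Sum>n=1..p. if n = l then \<sigma> l * V k l else 0)"
      using Uc l by (intro sum.cong) auto
    also have "\<dots> = \<sigma> l * V k l"
      using l by simp
    finally show ?thesis .
  qed
  then have Pw: "onb_proj p g (w l) = \<sigma> l *\<^sub>R z l" if "l \<in> {1..p}" for l
    unfolding onb_proj_def z_def scaleR_sum_right using that by (intro sum.cong) auto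
  have "(norm (onb_proj p g x))\<^sup>2 = (\<Sum>l=1..p. (x \<bullet> w l)\<^sup>2 * (\<sigma> l)\<^sup>2)" if x: "x \<in> L" for x
  proof -
    have "onb_proj p g x = onb_proj p g (\<Sum>l=1..p. (x \<bullet> w l) *\<^sub>R w l)"
      using orthonormal_basis_expansion[OF wb x] by simp
    also have "\<dots> = (\<Sum>l=1..p. ((x \<bullet> w l) * \<sigma> l) *\<^sub>R z l)"
      using Pw by (simp add: linear_sum[OF linear_onb_proj] linear_scale[OF linear_onb_proj])
    finally show ?thesis
      using orthonormal_family_norm_sum[OF zo] by (simp add: power_mult_distrib)
  qed
  with wb that show ?thesis
    by blast
qed

text \<open>The two halves of the Courant--Fischer min-max characterization of \<open>\<sigma> j\<close>.\<close>
lemma exists_unit_norm_onb_proj_le_singular_value: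
  assumes j: "j \<in> {1..p}" and S: "subspace S" "S \<subseteq> L" "j \<le> dim S"
  shows "\<exists>x\<in>S. norm x = 1 \<and> (norm (onb_proj p g x))\<^sup>2 \<le> (\<sigma> j)\<^sup>2"
proof -
  obtain w where wb: "orthonormal_basis p w L"
    and rep: "\<And>x. x \<in> L \<Longrightarrow> (norm (onb_proj p g x))\<^sup>2 = (\<Sum>l=1..p. (x \<bullet> w l)\<^sup>2 * (\<sigma> l)\<^sup>2)"
    using norm_onb_proj_sq_singular_values by blast
  have wo: "orthonormal_family p w"
    using orthonormal_basis_family[OF wb] .
  let ?W = "span (w ` {j..p})"
  have Wp: "{j..p} \<subseteq> {1..p}"
    using j by auto
  have "?W \<subseteq> L"
    using orthonormal_basis_mem[OF wb] Wp L(1) by (intro span_minimal) auto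
  moreover have "dim L < dim S + dim ?W"
    using dim_span_orthonormal_family[OF wo Wp] S(3) j L(2) by simp
  ultimately obtain x where xS: "x \<in> S" and xW: "x \<in> ?W" and x1: "norm x = 1"
    using unit_vector_in_Int_subspaces[OF S(1,2) subspace_span _ L(1)] by blast
  have xL: "x \<in> L"
    using xS S(2) by blast
  have "(norm (onb_proj p g x))\<^sup>2 \<le> (\<Sum>l=1..p. (x \<bullet> w l)\<^sup>2 * (\<sigma> j)\<^sup>2)"
    unfolding rep[OF xL]
  proof (rule sum_mono)
    fix l assume l: "l \<in> {1..p}"
    show "(x \<bullet> w l)\<^sup>2 * (\<sigma> l)\<^sup>2 \<le> (x \<bullet> w l)\<^sup>2 * (\<sigma> j)\<^sup>2"
    proof (cases "l < j")
      case True
      then show ?thesis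
        using orthonormal_family_orthogonal_span[OF wo Wp xW] l by simp
    next
      case False
      then show ?thesis
        using singular_values_antimono[of j l] singular_values_nonneg[OF l] j l
        by (intro mult_left_mono power_mono) auto
    qed
  qed
  also have "\<dots> = (\<sigma> j)\<^sup>2"
    using orthonormal_basis_parseval[OF wb xL, of x] x1
    by (simp add: sum_distrib_right[symmetric] power2_eq_square norm_eq_1)
  finally show ?thesis
    using xS x1 by blast
qed

lemma exists_unit_norm_onb_proj_ge_singular_value:
  assumes j: "j \<in> {1..p}" and S: "subspace S" "S \<subseteq> L" "p + 1 - j \<le> dim S"
  shows "\<exists>x\<in>S. norm x = 1 \<and> (\<sigma> j)\<^sup>2 \<le> (norm (onb_proj p g x))\<^sup>2"
proof -
  obtain w where wb: "orthonormal_basis p w L"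
    and rep: "\<And>x. x \<in> L \<Longrightarrow> (norm (onb_proj p g x))\<^sup>2 = (\<Sum>l=1..p. (x \<bullet> w l)\<^sup>2 * (\<sigma> l)\<^sup>2)"
    using norm_onb_proj_sq_singular_values by blast
  have wo: "orthonormal_family p w"
    using orthonormal_basis_family[OF wb] .
  let ?W = "span (w ` {1..j})"
  have Wp: "{1..j} \<subseteq> {1..p}"
    using j by auto
  have "?W \<subseteq> L"
    using orthonormal_basis_mem[OF wb] Wp L(1) by (intro span_minimal) auto
  moreover have "dim L < dim S + dim ?W"
    using dim_span_orthonormal_family[OF wo Wp] S(3) j L(2) by simp
  ultimately obtain x where xS: "x \<in> S" and xW: "x \<in> ?W" and x1: "norm x = 1"
    using unit_vector_in_Int_subspaces[OF S(1,2) subspace_span _ L(1)] by blast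
  have xL: "x \<in> L"
    using xS S(2) by blast
  have "(\<sigma> j)\<^sup>2 = (\<Sum>l=1..p. (x \<bullet> w l)\<^sup>2 * (\<sigma> j)\<^sup>2)"
    using orthonormal_basis_parseval[OF wb xL, of x] x1
    by (simp add: sum_distrib_right[symmetric] power2_eq_square norm_eq_1)
  also have "\<dots> \<le> (norm (onb_proj p g x))\<^sup>2"
    unfolding rep[OF xL]
  proof (rule sum_mono)
    fix l assume l: "l \<in> {1..p}"
    show "(x \<bullet> w l)\<^sup>2 * (\<sigma> j)\<^sup>2 \<le> (x \<bullet> w l)\<^sup>2 * (\<sigma> l)\<^sup>2"
    proof (cases "j < l")
      case True
      then show ?thesis
        using orthonormal_family_orthogonal_span[OF wo Wp xW] l by simp
    next
      case False
      then show ?thesis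
        using singular_values_antimono[of l j] singular_values_nonneg[OF j] j l
        by (intro mult_left_mono power_mono) auto
    qed
  qed
  finally show ?thesis
    using xS x1 by blast
qed

lemma singular_values_le_1:
  assumes j: "j \<in> {1..p}"
  shows "\<sigma> j \<le> 1"
proof -
  have "p + 1 - j \<le> dim L"
    using L(2) j by auto
  then obtain x where "x \<in> L" "norm x = 1" and x: "(\<sigma> j)\<^sup>2 \<le> (norm (onb_proj p g x))\<^sup>2"
    using exists_unit_norm_onb_proj_ge_singular_value[OF j L(1) subset_refl] by blast
  then have "(\<sigma> j)\<^sup>2 \<le> 1\<^sup>2"
    using norm_onb_proj_le[OF g K(1), of x] by (smt (verit) norm_ge_zero power_mono)
  then show ?thesis
    by (rule power2_le_imp_le) simp
qed

end

section \<open>Projection onto the graph of a linear map\<close>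

lemma sum_squares_le_square_sum:
  fixes a :: "nat \<Rightarrow> real"
  assumes "finite S" and "\<And>k. k \<in> S \<Longrightarrow> 0 \<le> a k"
  shows "(\<Sum>k\<in>S. (a k)\<^sup>2) \<le> (\<Sum>k\<in>S. a k)\<^sup>2"
proof -
  have "(\<Sum>k\<in>S. (a k)\<^sup>2) \<le> (\<Sum>k\<in>S. a k * (\<Sum>k\<in>S. a k))"
  proof (rule sum_mono)
    fix k assume k: "k \<in> S"
    have "a k \<le> (\<Sum>k\<in>S. a k)"
      using member_le_sum[of k S a] assms k by auto
    then show "(a k)\<^sup>2 \<le> a k * (\<Sum>k\<in>S. a k)"
      using assms(2)[OF k] by (simp add: power2_eq_square mult_left_mono)
  qed
  then show ?thesis
    by (simp add: sum_distrib_right power2_eq_square)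
qed

lemma norm_image_onb_proj_le:
  assumes f: "orthonormal_basis p f M" and A: "linear A"
  shows "norm (A (onb_proj p f v)) \<le> (\<Sum>k=1..p. norm (A (f k))) * norm v"
proof -
  have "norm (A (onb_proj p f v)) = norm (\<Sum>k=1..p. (v \<bullet> f k) *\<^sub>R A (f k))"
    unfolding onb_proj_def by (simp add: linear_sum[OF A] linear_scale[OF A])
  also have "\<dots> \<le> (\<Sum>k=1..p. norm v * norm (A (f k)))"
  proof (rule order_trans[OF norm_sum sum_mono])
    fix k assume "k \<in> {1..p}"
    then have "\<bar>v \<bullet> f k\<bar> \<le> norm v"
      using Cauchy_Schwarz_ineq2[of v "f k"] orthonormal_family_norm[OF orthonormal_basis_family[OF f]]
      by simp
    then show "norm ((v \<bullet> f k) *\<^sub>R A (f k)) \<le> norm v * norm (A (f k))"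
      by (simp add: mult_right_mono)
  qed
  finally show ?thesis
    by (simp add: sum_distrib_left mult.commute)
qed

text \<open>The first-order variation of \<open>norm (onb_proj x)\<^sup>2\<close> when \<open>M\<close> is replaced by the graph
  of \<open>A : M \<rightarrow> M\<^sup>\<bottom>\<close>, polarized.\<close>
definition graph_variation :: "nat \<Rightarrow> (nat \<Rightarrow> 'a::euclidean_space) \<Rightarrow> ('a \<Rightarrow> 'a) \<Rightarrow> 'a \<Rightarrow> 'a \<Rightarrow> real"
  where "graph_variation p f A u v = (u - onb_proj p f u) \<bullet> A (onb_proj p f v)"

lemma bilinear_graph_variation:
  assumes A: "linear A"
  shows "bilinear (graph_variation p f A)"
  unfolding bilinear_def graph_variation_def
  by (auto intro!: linearI simp: linear_add[OF linear_onb_proj] linear_scale[OF linear_onb_proj]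
      linear_add[OF A] linear_scale[OF A] inner_add_left inner_add_right algebra_simps)

lemma graph_variation_bound:
  assumes f: "orthonormal_basis p f M" "subspace M" and A: "linear A"
  shows "\<bar>graph_variation p f A u v\<bar> \<le> (\<Sum>k=1..p. norm (A (f k))) * norm u * norm v"
proof -
  have "\<bar>graph_variation p f A u v\<bar> \<le> norm (u - onb_proj p f u) * norm (A (onb_proj p f v))"
    unfolding graph_variation_def by (rule Cauchy_Schwarz_ineq2)
  also have "\<dots> \<le> norm u * ((\<Sum>k=1..p. norm (A (f k))) * norm v)"
    by (intro mult_mono norm_diff_onb_proj_le[OF f] norm_image_onb_proj_le[OF f(1) A]) auto
  finally show ?thesis
    by (simp add: mult_ac)
qed

lemma inner_image_onb_expansion:
  assumes f: "orthonormal_basis p f M" and A: "linear A" and v: "v \<in> M"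
  shows "n \<bullet> A v = (\<Sum>k=1..p. (n \<bullet> A (f k)) *\<^sub>R f k) \<bullet> v"
proof -
  have "A v = A (\<Sum>k=1..p. (v \<bullet> f k) *\<^sub>R f k)"
    by (rule arg_cong[OF orthonormal_basis_expansion[OF f v]])
  then have "A v = (\<Sum>k=1..p. (v \<bullet> f k) *\<^sub>R A (f k))"
    by (simp add: linear_sum[OF A] linear_scale[OF A])
  then show ?thesis
    by (simp add: inner_sum_left inner_sum_right inner_commute mult.commute)
qed

lemma norm_le_if_norm_sq_eq_inner:
  fixes t z u :: "'a::real_inner"
  assumes t: "(norm t)\<^sup>2 = z \<bullet> u" and u: "norm u \<le> norm t"
  shows "norm t \<le> norm z"
proof (cases "t = 0")
  case False
  have "norm t * norm t \<le> norm z * norm u"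
    using t norm_cauchy_schwarz[of z u] by (simp add: power2_eq_square)
  also have "\<dots> \<le> norm z * norm t"
    using u by (simp add: mult_left_mono)
  finally show ?thesis
    using False by simp
qed simp

context
  fixes M K :: "'a::euclidean_space set" and p q :: nat and f g :: "nat \<Rightarrow> 'a" and A :: "'a \<Rightarrow> 'a"
  assumes M: "subspace M" and f: "orthonormal_basis p f M"
    and A: "linear A" and AM: "\<forall>u\<in>M. A u \<in> orthogonal_comp M"
    and K: "K = {u + A u | u. u \<in> M}" "subspace K" and g: "orthonormal_basis q g K"
begin

lemma inner_image_graph: "u \<in> M \<Longrightarrow> v \<in> M \<Longrightarrow> u \<bullet> A v = 0"
  using AM unfolding orthogonal_comp_def orthogonal_def by blast

lemma norm_onb_proj_graph_sq_ge:
  "(norm (onb_proj p f x))\<^sup>2 + 2 * graph_variation p f A x x - (norm (A (onb_proj p f x)))\<^sup>2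
    \<le> (norm (onb_proj q g x))\<^sup>2"
proof -
  define m where "m = onb_proj p f x"
  define n where "n = x - m"
  have mM: "m \<in> M"
    unfolding m_def by (rule onb_proj_mem[OF f M])
  have mAm: "m \<bullet> A m = 0" and nm: "n \<bullet> m = 0"
    using inner_image_graph[OF mM mM] inner_diff_onb_proj[OF f mM] unfolding n_def m_def by auto
  define y where "y = m + A m"
  have "onb_proj q g x \<bullet> y = x \<bullet> y"
    using K(1) mM unfolding y_def by (intro inner_onb_proj[OF g]) blast
  also have "\<dots> = (m + n) \<bullet> (m + A m)"
    unfolding n_def y_def by simp
  also have "\<dots> = (norm m)\<^sup>2 + n \<bullet> A m"
    using mAm nm by (simp add: inner_add_left inner_add_right power2_norm_eq_inner inner_commute)
  finally have xy: "onb_proj q g x \<bullet> y = (norm m)\<^sup>2 + n \<bullet> A m" .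
  have yy: "(norm y)\<^sup>2 = (norm m)\<^sup>2 + (norm (A m))\<^sup>2"
    using mAm unfolding y_def power2_norm_eq_inner by (simp add: inner_add_left inner_add_right inner_commute)
  have cs: "(onb_proj q g x \<bullet> y)\<^sup>2 \<le> (norm (onb_proj q g x))\<^sup>2 * (norm y)\<^sup>2"
    using Cauchy_Schwarz_ineq[of "onb_proj q g x" y] by (simp add: power2_norm_eq_inner)
  have "((norm m)\<^sup>2 + 2 * (n \<bullet> A m) - (norm (A m))\<^sup>2) * (norm y)\<^sup>2 \<le> ((norm m)\<^sup>2 + n \<bullet> A m)\<^sup>2"
  proof -
    have "((norm m)\<^sup>2 + n \<bullet> A m)\<^sup>2 - ((norm m)\<^sup>2 + 2 * (n \<bullet> A m) - (norm (A m))\<^sup>2) * (norm y)\<^sup>2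
        = (n \<bullet> A m - (norm (A m))\<^sup>2)\<^sup>2"
      unfolding yy by (simp add: power2_eq_square algebra_simps)
    then show ?thesis
      by (smt (verit) zero_le_power2)
  qed
  also have "\<dots> \<le> (norm (onb_proj q g x))\<^sup>2 * (norm y)\<^sup>2"
    using cs xy by simp
  finally have "(norm m)\<^sup>2 + 2 * (n \<bullet> A m) - (norm (A m))\<^sup>2 \<le> (norm (onb_proj q g x))\<^sup>2 \<or> y = 0"
    by (auto simp: mult_le_cancel_right)
  moreover have "y = 0 \<Longrightarrow> m = 0"
    using yy by (simp add: add_nonneg_eq_0_iff)
  ultimately show ?thesis
    unfolding graph_variation_def m_def[symmetric] n_def[symmetric]
    by (auto simp: linear_0[OF A])
qed

lemma norm_onb_proj_graph_sq_le:
  "(norm (onb_proj q g x))\<^sup>2 \<le> (norm (onb_proj p f x))\<^sup>2 + 2 * graph_variation p f A x x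
     + (\<Sum>k=1..p. ((x - onb_proj p f x) \<bullet> A (f k))\<^sup>2)"
proof -
  define m where "m = onb_proj p f x"
  define n where "n = x - m"
  define a where "a = (\<Sum>k=1..p. (n \<bullet> A (f k)) *\<^sub>R f k)"
  let ?t = "onb_proj q g x"
  have mM: "m \<in> M"
    unfolding m_def by (rule onb_proj_mem[OF f M])
  obtain u where uM: "u \<in> M" and tu: "?t = u + A u"
    using onb_proj_mem[OF g K(2), of x] unfolding K(1) by blast
  have uAu: "u \<bullet> A u = 0" and mAu: "m \<bullet> A u = 0" and nu: "n \<bullet> u = 0"
    using inner_image_graph[OF uM uM] inner_image_graph[OF mM uM] inner_diff_onb_proj[OF f uM]
    unfolding n_def m_def by auto
  have "(norm ?t)\<^sup>2 = x \<bullet> ?t"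
    by (rule norm_onb_proj_sq[OF g K(2)])
  also have "\<dots> = (m + n) \<bullet> (u + A u)"
    using tu unfolding n_def by simp
  also have "\<dots> = (m + a) \<bullet> u"
    using nu mAu inner_image_onb_expansion[OF f A uM, of n]
    by (simp add: a_def inner_add_left inner_add_right inner_commute)
  finally have "(norm ?t)\<^sup>2 = (m + a) \<bullet> u" .
  moreover have "(norm u)\<^sup>2 \<le> (norm ?t)\<^sup>2"
    unfolding tu power2_norm_eq_inner using uAu by (simp add: inner_add_left inner_add_right inner_commute)
  then have "norm u \<le> norm ?t"
    by (rule power2_le_imp_le) simp
  ultimately have "norm ?t \<le> norm (m + a)"
    by (rule norm_le_if_norm_sq_eq_inner)
  then have "(norm ?t)\<^sup>2 \<le> (norm (m + a))\<^sup>2"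
    by (simp add: power_mono)
  also have "\<dots> = (norm m)\<^sup>2 + 2 * (n \<bullet> A m) + (norm a)\<^sup>2"
    using inner_image_onb_expansion[OF f A mM, of n] unfolding power2_norm_eq_inner
    by (simp add: a_def inner_add_left inner_add_right inner_commute)
  also have "(norm a)\<^sup>2 = (\<Sum>k=1..p. (n \<bullet> A (f k))\<^sup>2)"
    unfolding a_def by (rule orthonormal_family_norm_sum[OF orthonormal_basis_family[OF f]])
  finally show ?thesis
    unfolding graph_variation_def m_def n_def .
qed

lemma norm_onb_proj_graph_sq_approx:
  "\<bar>(norm (onb_proj q g x))\<^sup>2 - ((norm (onb_proj p f x))\<^sup>2 + 2 * graph_variation p f A x x)\<bar>
    \<le> (\<Sum>k=1..p. norm (A (f k)))\<^sup>2 * (norm x)\<^sup>2"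
proof -
  let ?\<beta> = "\<Sum>k=1..p. norm (A (f k))"
  have "(norm (A (onb_proj p f x)))\<^sup>2 \<le> (?\<beta> * norm x)\<^sup>2"
    using norm_image_onb_proj_le[OF f A, of x] by (simp add: power_mono)
  then have Am: "(norm (A (onb_proj p f x)))\<^sup>2 \<le> ?\<beta>\<^sup>2 * (norm x)\<^sup>2"
    by (simp add: power_mult_distrib)
  have "(\<Sum>k=1..p. ((x - onb_proj p f x) \<bullet> A (f k))\<^sup>2) \<le> (\<Sum>k=1..p. (norm (A (f k)))\<^sup>2 * (norm x)\<^sup>2)"
  proof (rule sum_mono)
    fix k
    have "\<bar>(x - onb_proj p f x) \<bullet> A (f k)\<bar> \<le> norm (x - onb_proj p f x) * norm (A (f k))"
      by (rule Cauchy_Schwarz_ineq2)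
    also have "\<dots> \<le> norm x * norm (A (f k))"
      by (rule mult_right_mono[OF norm_diff_onb_proj_le[OF f M]]) simp
    finally have "\<bar>(x - onb_proj p f x) \<bullet> A (f k)\<bar>\<^sup>2 \<le> (norm x * norm (A (f k)))\<^sup>2"
      by (rule power_mono) simp
    then show "((x - onb_proj p f x) \<bullet> A (f k))\<^sup>2 \<le> (norm (A (f k)))\<^sup>2 * (norm x)\<^sup>2"
      by (simp add: power_mult_distrib mult.commute)
  qed
  also have "\<dots> \<le> ?\<beta>\<^sup>2 * (norm x)\<^sup>2"
    unfolding sum_distrib_right[symmetric]
    by (intro mult_right_mono sum_squares_le_square_sum) auto
  finally have "(\<Sum>k=1..p. ((x - onb_proj p f x) \<bullet> A (f k))\<^sup>2) \<le> ?\<beta>\<^sup>2 * (norm x)\<^sup>2" .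
  then show ?thesis
    using norm_onb_proj_graph_sq_ge[of x] norm_onb_proj_graph_sq_le[of x] Am
    unfolding abs_le_iff by linarith
qed

end

section \<open>Perturbation of an isolated eigenvalue\<close>

lemma square_completion_bound: "(g::real) > 0 \<Longrightarrow> - 8 * b\<^sup>2 / g \<le> (g / 2) * u\<^sup>2 - 4 * b * u"
proof -
  assume g: "g > 0"
  have "0 \<le> (g / 2) * (u - 4 * b / g)\<^sup>2"
    using g by simp
  also have "\<dots> = (g / 2) * u\<^sup>2 - 4 * b * u + 8 * b\<^sup>2 / g"
    using g by (simp add: power2_eq_square field_simps)
  finally show ?thesis
    by simp
qed

lemma norm_sq_split_unit:
  fixes u :: "'a::real_inner"
  assumes "norm u = 1"
  shows "(norm x)\<^sup>2 = (x \<bullet> u)\<^sup>2 + (norm (x - (x \<bullet> u) *\<^sub>R u))\<^sup>2"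
proof -
  have "u \<bullet> u = 1"
    using assms by (simp add: norm_eq_1)
  then show ?thesis
    unfolding power2_norm_eq_inner
    by (simp add: inner_diff_left inner_diff_right inner_commute power2_eq_square algebra_simps)
qed

lemma bilinear_perturbation_lower:
  fixes B :: "'a::real_normed_vector \<Rightarrow> 'a \<Rightarrow> real"
  assumes B: "bilinear B" and B_bound: "\<And>u v. \<bar>B u v\<bar> \<le> \<beta> * norm u * norm v"
    and a: "norm a = 1" and t: "t\<^sup>2 + (norm y)\<^sup>2 = 1"
  shows "B a a - 2 * \<beta> * (norm y)\<^sup>2 - 2 * \<beta> * norm y \<le> B (t *\<^sub>R a + y) (t *\<^sub>R a + y)"
proof -
  let ?u = "norm y"
  have "t\<^sup>2 \<le> 1"
    using t zero_le_power2[of ?u] by linarith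
  then have t1: "\<bar>t\<bar> \<le> 1"
    by (simp add: abs_square_le_1)
  have "B (t *\<^sub>R a + y) (t *\<^sub>R a + y) = t\<^sup>2 * B a a + t * B a y + t * B y a + B y y"
    by (simp add: bilinear_ladd[OF B] bilinear_radd[OF B] bilinear_lmul[OF B] bilinear_rmul[OF B]
        power2_eq_square algebra_simps)
  moreover have "\<bar>(t\<^sup>2 - 1) * B a a\<bar> \<le> \<beta> * ?u\<^sup>2"
  proof -
    have "t\<^sup>2 - 1 = - ?u\<^sup>2"
      using t by linarith
    then have "\<bar>(t\<^sup>2 - 1) * B a a\<bar> = ?u\<^sup>2 * \<bar>B a a\<bar>"
      by (simp add: abs_mult)
    also have "\<dots> \<le> ?u\<^sup>2 * \<beta>"
      using B_bound[of a a] a by (intro mult_left_mono) auto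
    finally show ?thesis
      by (simp add: mult.commute)
  qed
  moreover have "\<bar>t * B a y\<bar> \<le> \<beta> * ?u" "\<bar>t * B y a\<bar> \<le> \<beta> * ?u"
    using mult_left_le_one_le[of "\<bar>B a y\<bar>" "\<bar>t\<bar>"] mult_left_le_one_le[of "\<bar>B y a\<bar>" "\<bar>t\<bar>"]
      B_bound[of a y] B_bound[of y a] a t1
    unfolding abs_mult by auto
  moreover have "\<bar>B y y\<bar> \<le> \<beta> * ?u\<^sup>2"
    using B_bound[of y y] by (simp add: power2_eq_square mult.assoc)
  ultimately show ?thesis
    by (simp add: abs_le_iff algebra_simps)
qed

lemma coordinate_sum_gap_lower:
  fixes e :: "nat \<Rightarrow> 'a::euclidean_space" and d :: "nat \<Rightarrow> real"
  assumes e: "orthonormal_basis p e L" "subspace L" and x: "x \<in> L" and j: "j \<in> {1..p}"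
    and gap: "\<And>k. k \<in> {1..p} \<Longrightarrow> k \<noteq> j \<Longrightarrow> x \<bullet> e k \<noteq> 0 \<Longrightarrow> d j + g \<le> d k"
  shows "(x \<bullet> e j)\<^sup>2 * d j + (norm (x - (x \<bullet> e j) *\<^sub>R e j))\<^sup>2 * (d j + g) \<le> (\<Sum>k=1..p. (x \<bullet> e k)\<^sup>2 * d k)"
proof -
  define y where "y = x - (x \<bullet> e j) *\<^sub>R e j"
  have yL: "y \<in> L"
    unfolding y_def using x orthonormal_basis_mem[OF e(1) j] e(2) by (simp add: subspace_diff subspace_scale)
  have ye: "y \<bullet> e k = (if k = j then 0 else x \<bullet> e k)" if "k \<in> {1..p}" for k
  proof -
    have "e j \<bullet> e k = (if j = k then 1 else 0)"
      using orthonormal_basis_family[OF e(1)] j that unfolding orthonormal_family_def by blast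
    then show ?thesis
      unfolding y_def by (simp add: inner_diff_left)
  qed
  have "(\<Sum>k=1..p. (x \<bullet> e k)\<^sup>2 * d k) = (\<Sum>k=1..p. (if k = j then (x \<bullet> e j)\<^sup>2 * d j else 0) + (y \<bullet> e k)\<^sup>2 * d k)"
    using ye by (intro sum.cong) auto
  then have split: "(\<Sum>k=1..p. (x \<bullet> e k)\<^sup>2 * d k) = (x \<bullet> e j)\<^sup>2 * d j + (\<Sum>k=1..p. (y \<bullet> e k)\<^sup>2 * d k)"
    using j by (simp add: sum.distrib)
  have "(\<Sum>k=1..p. (y \<bullet> e k)\<^sup>2) = y \<bullet> y"
    using orthonormal_basis_parseval[OF e(1) yL, of y] by (simp add: power2_eq_square)
  then have "(norm y)\<^sup>2 * (d j + g) = (\<Sum>k=1..p. (y \<bullet> e k)\<^sup>2 * (d j + g))"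
    by (simp add: sum_distrib_right[symmetric] dot_square_norm)
  also have "\<dots> \<le> (\<Sum>k=1..p. (y \<bullet> e k)\<^sup>2 * d k)"
  proof (rule sum_mono)
    fix k assume k: "k \<in> {1..p}"
    show "(y \<bullet> e k)\<^sup>2 * (d j + g) \<le> (y \<bullet> e k)\<^sup>2 * d k"
    proof (cases "y \<bullet> e k = 0")
      case False
      then have "k \<noteq> j" "x \<bullet> e k \<noteq> 0"
        using ye[OF k] by (auto split: if_splits)
      then show ?thesis
        using gap[OF k] by (simp add: mult_left_mono)
    qed simp
  qed
  finally show ?thesis
    unfolding split y_def by simp
qed

text \<open>Second-order perturbation of the eigenvalue \<open>d j\<close> of a diagonal quadratic form, tested on
  unit vectors that only charge eigenvalues at least \<open>g\<close> above \<open>d j\<close>.\<close>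
lemma diagonal_form_perturbation_lower:
  fixes e :: "nat \<Rightarrow> 'a::euclidean_space" and B :: "'a \<Rightarrow> 'a \<Rightarrow> real" and d :: "nat \<Rightarrow> real"
  assumes e: "orthonormal_basis p e L" "subspace L"
    and B: "bilinear B" and B_bound: "\<And>u v. \<bar>B u v\<bar> \<le> \<beta> * norm u * norm v"
    and j: "j \<in> {1..p}" and g: "0 < g" "8 * \<beta> \<le> g"
    and x: "x \<in> L" "norm x = 1"
    and gap: "\<And>k. k \<in> {1..p} \<Longrightarrow> k \<noteq> j \<Longrightarrow> x \<bullet> e k \<noteq> 0 \<Longrightarrow> d j + g \<le> d k"
  shows "d j + 2 * B (e j) (e j) - 8 * \<beta>\<^sup>2 / g \<le> (\<Sum>k=1..p. (x \<bullet> e k)\<^sup>2 * d k) + 2 * B x x"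
proof -
  have ej: "norm (e j) = 1"
    using orthonormal_family_norm[OF orthonormal_basis_family[OF e(1)] j] .
  define t where "t = x \<bullet> e j"
  define u where "u = norm (x - t *\<^sub>R e j)"
  have tu: "t\<^sup>2 + u\<^sup>2 = 1"
    using norm_sq_split_unit[OF ej, of x] x(2) unfolding t_def u_def by simp
  have "B (e j) (e j) - 2 * \<beta> * u\<^sup>2 - 2 * \<beta> * u \<le> B x x"
    using bilinear_perturbation_lower[OF B B_bound ej, of t "x - t *\<^sub>R e j"] tu unfolding u_def by simp
  moreover have "t\<^sup>2 * d j + u\<^sup>2 * (d j + g) \<le> (\<Sum>k=1..p. (x \<bullet> e k)\<^sup>2 * d k)"
    using coordinate_sum_gap_lower[where d=d and g=g, OF e x(1) j gap] unfolding t_def u_def by simp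
  moreover have "t\<^sup>2 * d j + u\<^sup>2 * (d j + g) = d j + g * u\<^sup>2"
    using tu by (simp add: algebra_simps flip: distrib_left)
  moreover have "(g / 2) * u\<^sup>2 \<le> g * u\<^sup>2 - 4 * \<beta> * u\<^sup>2"
  proof -
    have "0 \<le> (g / 2 - 4 * \<beta>) * u\<^sup>2"
      using g(2) by simp
    moreover have "(g / 2) * u\<^sup>2 = (g * u\<^sup>2 - 4 * \<beta> * u\<^sup>2) - (g / 2 - 4 * \<beta>) * u\<^sup>2"
      by (simp add: algebra_simps)
    ultimately show ?thesis
      by linarith
  qed
  moreover have "- 8 * \<beta>\<^sup>2 / g \<le> (g / 2) * u\<^sup>2 - 4 * \<beta> * u"
    by (rule square_completion_bound[OF g(1)])
  ultimately show ?thesis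
    by linarith
qed

lemma bilinear_uminus: "bilinear B \<Longrightarrow> bilinear (\<lambda>u v. - B u v)"
  unfolding bilinear_def by (simp add: linear_compose_neg)

lemma diagonal_form_perturbation_upper:
  fixes e :: "nat \<Rightarrow> 'a::euclidean_space" and B :: "'a \<Rightarrow> 'a \<Rightarrow> real" and d :: "nat \<Rightarrow> real"
  assumes e: "orthonormal_basis p e L" "subspace L"
    and B: "bilinear B" and B_bound: "\<And>u v. \<bar>B u v\<bar> \<le> \<beta> * norm u * norm v"
    and j: "j \<in> {1..p}" and g: "0 < g" "8 * \<beta> \<le> g"
    and x: "x \<in> L" "norm x = 1"
    and gap: "\<And>k. k \<in> {1..p} \<Longrightarrow> k \<noteq> j \<Longrightarrow> x \<bullet> e k \<noteq> 0 \<Longrightarrow> d k + g \<le> d j"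
  shows "(\<Sum>k=1..p. (x \<bullet> e k)\<^sup>2 * d k) + 2 * B x x \<le> d j + 2 * B (e j) (e j) + 8 * \<beta>\<^sup>2 / g"
proof -
  have "- d j + g \<le> - d k" if "k \<in> {1..p}" "k \<noteq> j" "x \<bullet> e k \<noteq> 0" for k
    using gap[OF that] by linarith
  then have "- d j + 2 * - B (e j) (e j) - 8 * \<beta>\<^sup>2 / g \<le> (\<Sum>k=1..p. (x \<bullet> e k)\<^sup>2 * - d k) + 2 * - B x x"
    using B_bound
    by (intro diagonal_form_perturbation_lower[OF e bilinear_uminus[OF B] _ j g x, of "\<lambda>k. - d k"]) auto
  then show ?thesis
    by (simp add: sum_negf)
qed

context
  fixes L M :: "'a::euclidean_space set" and p :: nat and e f :: "nat \<Rightarrow> 'a" and c :: "nat \<Rightarrow> real"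
  assumes e: "orthonormal_basis p e L" and f: "orthonormal_basis p f M"
    and diag: "\<And>i k. i \<in> {1..p} \<Longrightarrow> k \<in> {1..p} \<Longrightarrow> e i \<bullet> f k = (if i = k then c k else 0)"
begin

lemma inner_basis_diagonal:
  assumes "y \<in> L" and "k \<in> {1..p}"
  shows "y \<bullet> f k = (y \<bullet> e k) * c k"
proof -
  have "y \<bullet> f k = (\<Sum>i=1..p. (y \<bullet> e i) *\<^sub>R e i) \<bullet> f k"
    by (rule arg_cong[OF orthonormal_basis_expansion[OF e assms(1)]])
  also have "\<dots> = (\<Sum>i=1..p. if i = k then (y \<bullet> e k) * c k else 0)"
    unfolding inner_sum_left using diag[OF _ assms(2)] by (intro sum.cong) auto
  finally show ?thesis
    using assms(2) by simp
qed

lemma norm_onb_proj_sq_diagonal: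
  "y \<in> L \<Longrightarrow> (norm (onb_proj p f y))\<^sup>2 = (\<Sum>k=1..p. (y \<bullet> e k)\<^sup>2 * (c k)\<^sup>2)"
  using inner_basis_diagonal norm_onb_proj_sq_expansion[OF f, of y]
  by (simp add: power_mult_distrib)

lemma onb_proj_diagonal:
  assumes "j \<in> {1..p}"
  shows "onb_proj p f (e j) = c j *\<^sub>R f j"
proof -
  have "onb_proj p f (e j) = (\<Sum>k=1..p. if k = j then c j *\<^sub>R f j else 0)"
    unfolding onb_proj_def using diag[OF assms] by (intro sum.cong) auto
  then show ?thesis
    using assms by simp
qed

context
  fixes A :: "'a \<Rightarrow> 'a" and K :: "'a set" and e' g' :: "nat \<Rightarrow> 'a" and \<sigma> :: "nat \<Rightarrow> real"
    and j :: nat and g :: real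
  assumes L: "subspace L" "dim L = p" and M: "subspace M"
    and A: "linear A" "\<forall>u\<in>M. A u \<in> orthogonal_comp M"
    and K: "K = {u + A u | u. u \<in> M}" "subspace K" "dim K = p"
    and e': "orthonormal_basis p e' L" and g': "orthonormal_basis p g' K"
    and sv: "is_singular_values p (\<lambda>i k. e' i \<bullet> g' k) \<sigma>"
    and j: "j \<in> {1..p}" and g: "g > 0"
    and gap_above: "\<And>k. k \<in> {1..p} \<Longrightarrow> k < j \<Longrightarrow> (c j)\<^sup>2 + g \<le> (c k)\<^sup>2"
    and gap_below: "\<And>k. k \<in> {1..p} \<Longrightarrow> j < k \<Longrightarrow> (c k)\<^sup>2 + g \<le> (c j)\<^sup>2"
    and small: "8 * (\<Sum>k=1..p. norm (A (f k))) \<le> g"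
begin

lemma norm_onb_proj_graph_sq_diagonal_approx:
  assumes "x \<in> L" "norm x = 1"
  shows "\<bar>(norm (onb_proj p g' x))\<^sup>2 - ((\<Sum>k=1..p. (x \<bullet> e k)\<^sup>2 * (c k)\<^sup>2) + 2 * graph_variation p f A x x)\<bar>
    \<le> (\<Sum>k=1..p. norm (A (f k)))\<^sup>2"
  using norm_onb_proj_graph_sq_approx[OF M f A K(1,2) g', of x] norm_onb_proj_sq_diagonal[OF assms(1)] assms(2)
  by simp

lemma singular_value_sq_lower:
  "(c j)\<^sup>2 + 2 * graph_variation p f A (e j) (e j)
    - 8 * (\<Sum>k=1..p. norm (A (f k)))\<^sup>2 / g - (\<Sum>k=1..p. norm (A (f k)))\<^sup>2 \<le> (\<sigma> j)\<^sup>2"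
proof -
  let ?S = "span (e ` {1..j})"
  have eo: "orthonormal_family p e"
    using orthonormal_basis_family[OF e] .
  have Sp: "{1..j} \<subseteq> {1..p}"
    using j by auto
  have SL: "?S \<subseteq> L"
    using orthonormal_basis_mem[OF e] Sp L(1) by (intro span_minimal) auto
  moreover have "j \<le> dim ?S"
    using dim_span_orthonormal_family[OF eo Sp] by simp
  ultimately obtain x where xS: "x \<in> ?S" and x1: "norm x = 1"
    and "(norm (onb_proj p g' x))\<^sup>2 \<le> (\<sigma> j)\<^sup>2"
    using exists_unit_norm_onb_proj_le_singular_value[OF L e' K(2,3) g' sv j subspace_span] by blast
  moreover have xL: "x \<in> L"
    using xS SL by blast
  moreover have "(c j)\<^sup>2 + 2 * graph_variation p f A (e j) (e j) - 8 * (\<Sum>k=1..p. norm (A (f k)))\<^sup>2 / g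
      \<le> (\<Sum>k=1..p. (x \<bullet> e k)\<^sup>2 * (c k)\<^sup>2) + 2 * graph_variation p f A x x"
    using orthonormal_family_orthogonal_span[OF eo Sp xS] gap_above
    by (intro diagonal_form_perturbation_lower[OF e L(1) bilinear_graph_variation[OF A(1)]
          graph_variation_bound[OF f M A(1)] j g small xL x1]) force
  ultimately show ?thesis
    using norm_onb_proj_graph_sq_diagonal_approx[OF xL x1] by linarith
qed

lemma singular_value_sq_upper:
  "(\<sigma> j)\<^sup>2 \<le> (c j)\<^sup>2 + 2 * graph_variation p f A (e j) (e j)
    + 8 * (\<Sum>k=1..p. norm (A (f k)))\<^sup>2 / g + (\<Sum>k=1..p. norm (A (f k)))\<^sup>2"
proof -
  let ?S = "span (e ` {j..p})"
  have eo: "orthonormal_family p e"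
    using orthonormal_basis_family[OF e] .
  have Sp: "{j..p} \<subseteq> {1..p}"
    using j by auto
  have SL: "?S \<subseteq> L"
    using orthonormal_basis_mem[OF e] Sp L(1) by (intro span_minimal) auto
  moreover have "p + 1 - j \<le> dim ?S"
    using dim_span_orthonormal_family[OF eo Sp] by simp
  ultimately obtain x where xS: "x \<in> ?S" and x1: "norm x = 1"
    and "(\<sigma> j)\<^sup>2 \<le> (norm (onb_proj p g' x))\<^sup>2"
    using exists_unit_norm_onb_proj_ge_singular_value[OF L e' K(2,3) g' sv j subspace_span] by blast
  moreover have xL: "x \<in> L"
    using xS SL by blast
  moreover have "(\<Sum>k=1..p. (x \<bullet> e k)\<^sup>2 * (c k)\<^sup>2) + 2 * graph_variation p f A x x
      \<le> (c j)\<^sup>2 + 2 * graph_variation p f A (e j) (e j) + 8 * (\<Sum>k=1..p. norm (A (f k)))\<^sup>2 / g"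
    using orthonormal_family_orthogonal_span[OF eo Sp xS] gap_below
    by (intro diagonal_form_perturbation_upper[OF e L(1) bilinear_graph_variation[OF A(1)]
          graph_variation_bound[OF f M A(1)] j g small xL x1]) force
  ultimately show ?thesis
    using norm_onb_proj_graph_sq_diagonal_approx[OF xL x1] by linarith
qed

lemma singular_value_sq_expansion:
  "\<bar>(\<sigma> j)\<^sup>2 - ((c j)\<^sup>2 + 2 * graph_variation p f A (e j) (e j))\<bar>
     \<le> (\<Sum>k=1..p. norm (A (f k)))\<^sup>2 + 8 * (\<Sum>k=1..p. norm (A (f k)))\<^sup>2 / g"
  using singular_value_sq_lower singular_value_sq_upper by (simp add: abs_le_iff)

end

end

section \<open>Differentiating an angle\<close>

lemma has_real_derivative_quadratic_approx:
  fixes F G :: "real \<Rightarrow> real"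
  assumes G: "(G has_real_derivative D) (at 0)"
    and close: "\<forall>\<^sub>F x in nhds 0. \<bar>F x - G x\<bar> \<le> C * x\<^sup>2"
  shows "(F has_real_derivative D) (at 0)"
proof -
  define r where "r x = F x - G x" for x
  have r0: "r 0 = 0"
    using eventually_nhds_x_imp_x[OF close] unfolding r_def by simp
  have "\<forall>\<^sub>F x in at 0. \<bar>r x\<bar> \<le> C * x\<^sup>2"
    using close unfolding r_def eventually_at_filter by (rule eventually_mono) auto
  then have "\<forall>\<^sub>F x in at 0. norm ((r x - r 0) / (x - 0)) \<le> \<bar>C\<bar> * \<bar>x\<bar>"
  proof (rule eventually_mono)
    fix x assume rx: "\<bar>r x\<bar> \<le> C * x\<^sup>2"
    have "C * x\<^sup>2 \<le> \<bar>C\<bar> * x\<^sup>2"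
      by (rule mult_right_mono) simp_all
    also have "\<dots> = \<bar>C\<bar> * \<bar>x\<bar> * \<bar>x\<bar>"
      by (simp add: power2_eq_square mult.assoc)
    finally have "C * x\<^sup>2 \<le> \<bar>C\<bar> * \<bar>x\<bar> * \<bar>x\<bar>" .
    then show "norm ((r x - r 0) / (x - 0)) \<le> \<bar>C\<bar> * \<bar>x\<bar>"
      using rx r0 by (cases "x = 0") (simp_all add: divide_le_eq abs_divide)
  qed
  moreover have "((\<lambda>x. \<bar>C\<bar> * \<bar>x\<bar>) \<longlongrightarrow> 0) (at 0)"
    by (auto intro!: tendsto_eq_intros)
  ultimately have "(r has_real_derivative 0) (at 0)"
    unfolding has_field_derivative_iff by (rule Lim_null_comparison)
  then have "((\<lambda>x. G x + r x) has_real_derivative D + 0) (at 0)"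
    by (intro DERIV_add G)
  then show ?thesis
    unfolding r_def by simp
qed

lemma has_real_derivative_angle_of_cos_sq_expansion:
  fixes \<psi> \<rho> :: "real \<Rightarrow> real"
  assumes range: "\<forall>\<^sub>F \<epsilon> in nhds 0. 0 \<le> \<psi> \<epsilon> \<and> \<psi> \<epsilon> \<le> pi / 2"
    and expansion: "\<forall>\<^sub>F \<epsilon> in nhds 0. \<bar>(cos (\<psi> \<epsilon>))\<^sup>2 - ((cos a)\<^sup>2 - 2 * cos a * sin a * \<rho> \<epsilon>)\<bar> \<le> C * \<epsilon>\<^sup>2"
    and \<rho>: "(\<rho> has_real_derivative D) (at 0)" "\<rho> 0 = 0"
    and a: "0 < a" "a < pi / 2"
  shows "(\<psi> has_real_derivative D) (at 0)"
proof -
  define F where "F \<epsilon> = (cos (\<psi> \<epsilon>))\<^sup>2" for \<epsilon>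
  have sin_a: "0 < sin a"
    using a by (intro sin_gt_zero) simp_all
  have "1 - (cos a)\<^sup>2 = (sin a)\<^sup>2"
    by (simp add: sin_squared_eq)
  then have sqrt_a: "sqrt (1 - (cos a)\<^sup>2) = sin a"
    using sin_a by simp
  have cos_a: "0 < cos a" "cos a < 1"
    using a cos_gt_zero_pi[of a] cos_mono_less_eq[of a 0] by simp_all
  have "((\<lambda>\<epsilon>. (cos a)\<^sup>2 - 2 * cos a * sin a * \<rho> \<epsilon>) has_real_derivative 0 - 2 * cos a * sin a * D) (at 0)"
    by (intro DERIV_diff DERIV_const DERIV_cmult \<rho>(1))
  then have dF: "(F has_real_derivative - 2 * cos a * sin a * D) (at 0)"
    using has_real_derivative_quadratic_approx[OF _ expansion[folded F_def]] by simp
  have F0: "F 0 = (cos a)\<^sup>2"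
    using eventually_nhds_x_imp_x[OF expansion] \<rho>(2) unfolding F_def by simp
  have dsqrt: "DERIV sqrt (F 0) :> inverse (2 * cos a)"
    using DERIV_real_sqrt[of "F 0"] cos_a F0 by simp
  have darccos: "DERIV arccos (sqrt (F 0)) :> - inverse (sin a)"
    using DERIV_arccos[of "cos a"] cos_a F0 sqrt_a by simp
  have "- inverse (sin a) * (inverse (2 * cos a) * (- 2 * cos a * sin a * D)) = D"
    using sin_a cos_a(1) by (simp add: field_simps)
  then have dpsi: "((\<lambda>\<epsilon>. arccos (sqrt (F \<epsilon>))) has_real_derivative D) (at 0)"
    using DERIV_chain2[OF darccos DERIV_chain2[OF dsqrt dF]] by (simp only:)
  have "\<forall>\<^sub>F \<epsilon> in nhds 0. \<psi> \<epsilon> = arccos (sqrt (F \<epsilon>))"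
    using range
  proof (rule eventually_mono)
    fix \<epsilon> assume "0 \<le> \<psi> \<epsilon> \<and> \<psi> \<epsilon> \<le> pi / 2"
    moreover from this have "0 \<le> cos (\<psi> \<epsilon>)"
      by (intro cos_ge_zero) auto
    ultimately show "\<psi> \<epsilon> = arccos (sqrt (F \<epsilon>))"
      unfolding F_def by (simp add: arccos_cos)
  qed
  then show ?thesis
    using DERIV_cong_ev[OF refl _ refl, of \<psi> "\<lambda>\<epsilon>. arccos (sqrt (F \<epsilon>))" 0 D] dpsi by simp
qed

lemma eventually_norm_le_linear:
  fixes \<phi> :: "real \<Rightarrow> 'a::real_normed_vector"
  assumes "(\<phi> has_vector_derivative v) (at 0)" and "\<phi> 0 = 0"
  shows "\<forall>\<^sub>F \<epsilon> in nhds 0. norm (\<phi> \<epsilon>) \<le> (norm v + 1) * \<bar>\<epsilon>\<bar>"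
proof -
  have "\<forall>e>0. \<exists>d>0. \<forall>y. norm (y - 0) < d \<longrightarrow> norm (\<phi> y - \<phi> 0 - (y - 0) *\<^sub>R v) \<le> e * norm (y - 0)"
    using assms(1) unfolding has_vector_derivative_def has_derivative_at_alt by blast
  then obtain d where "d > 0" and d: "\<And>y. norm (y - 0) < d \<Longrightarrow> norm (\<phi> y - \<phi> 0 - (y - 0) *\<^sub>R v) \<le> 1 * norm (y - 0)"
    using zero_less_one by blast
  show ?thesis
    unfolding eventually_nhds_metric
  proof (intro exI[of _ d] conjI allI impI \<open>d > 0\<close>)
    fix y :: real assume "dist y 0 < d"
    then have "norm (\<phi> y - y *\<^sub>R v) \<le> \<bar>y\<bar>"
      using d[of y] assms(2) by (simp add: dist_norm)
    then show "norm (\<phi> y) \<le> (norm v + 1) * \<bar>y\<bar>"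
      using norm_triangle_sub[of "\<phi> y" "y *\<^sub>R v"] by (simp add: algebra_simps)
  qed
qed

section \<open>Jordan angles\<close>

lemma is_singular_values_cong:
  assumes same: "\<forall>j\<in>{1..p}. \<sigma> j = \<tau> j" and sv: "is_singular_values p C \<sigma>"
  shows "is_singular_values p C \<tau>"
proof -
  obtain U V :: "nat \<Rightarrow> nat \<Rightarrow> real" where
    U: "\<forall>i\<in>{1..p}. \<forall>l\<in>{1..p}. (\<Sum>k=1..p. U i k * U l k) = (if i = l then 1 else 0)" and
    V: "\<forall>i\<in>{1..p}. \<forall>l\<in>{1..p}. (\<Sum>k=1..p. V i k * V l k) = (if i = l then 1 else 0)" and
    C: "\<forall>i\<in>{1..p}. \<forall>k\<in>{1..p}. C i k = (\<Sum>l=1..p. U i l * \<sigma> l * V k l)"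
    using sv unfolding is_singular_values_def by blast
  have "\<forall>i\<in>{1..p}. \<forall>k\<in>{1..p}. C i k = (\<Sum>l=1..p. U i l * \<tau> l * V k l)"
    using C same by simp
  moreover have "\<forall>j\<in>{1..p}. 0 \<le> \<tau> j" "\<forall>j. 1 \<le> j \<and> j < p \<longrightarrow> \<tau> (j + 1) \<le> \<tau> j"
    using sv same unfolding is_singular_values_def by auto
  ultimately show ?thesis
    unfolding is_singular_values_def using U V by blast
qed

text \<open>Whatever bases and singular value decomposition \<open>jordan_angle\<close> picks, the cosines of the
  Jordan angles are singular values of the cross Gram matrix of suitable orthonormal bases.\<close>
lemma jordan_angles_cos_singular_values:
  fixes L K :: "'a::euclidean_space set"
  assumes L: "subspace L" "dim L = p" and K: "subspace K" "dim K = p"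
  obtains e g where "orthonormal_basis p e L" "orthonormal_basis p g K"
    "is_singular_values p (\<lambda>i k. e i \<bullet> g k) (\<lambda>j. cos (jordan_angle L K j))"
    "\<And>j. j \<in> {1..p} \<Longrightarrow> 0 \<le> jordan_angle L K j \<and> jordan_angle L K j \<le> pi / 2"
proof -
  define e where "e = (SOME e. orthonormal_basis p e L)"
  define g where "g = (SOME g. orthonormal_basis p g K)"
  define \<sigma> where "\<sigma> = (SOME \<sigma>. is_singular_values p (\<lambda>i k. e i \<bullet> g k) \<sigma>)"
  have e: "orthonormal_basis p e L"
    unfolding e_def using orthonormal_basis_exists[OF L] by (rule someI_ex)
  have g: "orthonormal_basis p g K"
    unfolding g_def using orthonormal_basis_exists[OF K] by (rule someI_ex)
  have sv: "is_singular_values p (\<lambda>i k. e i \<bullet> g k) \<sigma>"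
    unfolding \<sigma>_def using singular_values_exist[OF L e K g] by (rule someI_ex)
  have angle: "jordan_angle L K j = arccos (\<sigma> j)" for j
    by (simp add: jordan_angle_def Let_def singular_value_def L(2) e_def g_def \<sigma>_def)
  have \<sigma>: "0 \<le> \<sigma> j" "\<sigma> j \<le> 1" if "j \<in> {1..p}" for j
    using singular_values_nonneg[OF L e K g sv that] singular_values_le_1[OF L e K g sv that] .
  have "\<sigma> j = cos (jordan_angle L K j)" if "j \<in> {1..p}" for j
    using \<sigma>[OF that] by (simp add: angle)
  then have "\<forall>j\<in>{1..p}. \<sigma> j = cos (jordan_angle L K j)"
    by blast
  then have "is_singular_values p (\<lambda>i k. e i \<bullet> g k) (\<lambda>j. cos (jordan_angle L K j))"
    using sv by (rule is_singular_values_cong)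
  moreover have "0 \<le> jordan_angle L K j \<and> jordan_angle L K j \<le> pi / 2" if "j \<in> {1..p}" for j
    unfolding angle using \<sigma>[OF that] arccos_lbound[of "\<sigma> j"] arccos_le_pi2[of "\<sigma> j"] by simp
  ultimately show ?thesis
    by (rule that[OF e g])
qed

lemma jordan_angle_range:
  fixes L K :: "'a::euclidean_space set"
  assumes "subspace L" "dim L = p" "subspace K" "dim K = p" "j \<in> {1..p}"
  shows "0 \<le> jordan_angle L K j \<and> jordan_angle L K j \<le> pi / 2"
  using jordan_angles_cos_singular_values[OF assms(1-4)] assms(5) by metis

lemma jordan_angle_mono:
  fixes L K :: "'a::euclidean_space set"
  assumes L: "subspace L" "dim L = p" and K: "subspace K" "dim K = p"
    and ab: "1 \<le> a" "a \<le> b" "b \<le> p"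
  shows "jordan_angle L K a \<le> jordan_angle L K b"
proof -
  obtain e g where e: "orthonormal_basis p e L" and g: "orthonormal_basis p g K"
    and sv: "is_singular_values p (\<lambda>i k. e i \<bullet> g k) (\<lambda>j. cos (jordan_angle L K j))"
    and range: "\<And>j. j \<in> {1..p} \<Longrightarrow> 0 \<le> jordan_angle L K j \<and> jordan_angle L K j \<le> pi / 2"
    using jordan_angles_cos_singular_values[OF L K] by blast
  have "cos (jordan_angle L K b) \<le> cos (jordan_angle L K a)"
    using singular_values_antimono[OF L e K g sv ab] .
  then show ?thesis
    using range[of a] range[of b] ab by (simp add: cos_mono_le_eq)
qed

lemma jordan_angle_strict_mono:
  fixes L K :: "'a::euclidean_space set"
  assumes L: "subspace L" "dim L = p" and K: "subspace K" "dim K = p"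
    and distinct: "\<forall>j. 1 \<le> j \<and> j < p \<longrightarrow> jordan_angle L K (j + 1) \<noteq> jordan_angle L K j"
    and ab: "1 \<le> a" "a < b" "b \<le> p"
  shows "jordan_angle L K a < jordan_angle L K b"
proof -
  have "jordan_angle L K a \<le> jordan_angle L K (b - 1)" "jordan_angle L K (b - 1) \<le> jordan_angle L K b"
    using ab by (auto intro: jordan_angle_mono[OF L K])
  moreover have "1 \<le> b - 1 \<and> b - 1 < p"
    using ab by auto
  then have "jordan_angle L K (b - 1 + 1) \<noteq> jordan_angle L K (b - 1)"
    using distinct by blast
  moreover have "b - 1 + 1 = b"
    using ab by simp
  ultimately show ?thesis
    by (metis order_le_neq_trans order_le_less_trans)
qed

lemma finite_positive_lower_bound:
  fixes h :: "'b \<Rightarrow> real"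
  assumes S: "finite S" and pos: "\<And>k. k \<in> S \<Longrightarrow> 0 < h k"
  obtains g where "0 < g" "\<And>k. k \<in> S \<Longrightarrow> g \<le> h k"
proof
  show "0 < Min (insert 1 (h ` S))"
    using S pos by (subst Min_gr_iff) auto
  show "Min (insert 1 (h ` S)) \<le> h k" if "k \<in> S" for k
    using S that by (intro Min_le) auto
qed

lemma squares_gap_exists:
  fixes c :: "nat \<Rightarrow> real"
  assumes pos: "\<And>k. k \<in> {1..p} \<Longrightarrow> 0 < c k"
    and strict: "\<And>a b. a \<in> {1..p} \<Longrightarrow> b \<in> {1..p} \<Longrightarrow> a < b \<Longrightarrow> c b < c a"
    and j: "j \<in> {1..p}"
  obtains g where "0 < g" "\<And>k. k \<in> {1..p} \<Longrightarrow> k < j \<Longrightarrow> (c j)\<^sup>2 + g \<le> (c k)\<^sup>2"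
    "\<And>k. k \<in> {1..p} \<Longrightarrow> j < k \<Longrightarrow> (c k)\<^sup>2 + g \<le> (c j)\<^sup>2"
proof -
  have sq: "(c b)\<^sup>2 < (c a)\<^sup>2" if "a \<in> {1..p}" "b \<in> {1..p}" "a < b" for a b
    using strict[OF that] pos[OF that(2)] by (auto intro: power_strict_mono)
  obtain g where g: "0 < g" and le: "\<And>k. k \<in> {1..p} - {j} \<Longrightarrow> g \<le> \<bar>(c k)\<^sup>2 - (c j)\<^sup>2\<bar>"
  proof (rule finite_positive_lower_bound[of "{1..p} - {j}" "\<lambda>k. \<bar>(c k)\<^sup>2 - (c j)\<^sup>2\<bar>"])
    show "0 < \<bar>(c k)\<^sup>2 - (c j)\<^sup>2\<bar>" if "k \<in> {1..p} - {j}" for k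
      using sq[of k j] sq[of j k] j that by (cases "k < j") auto
  qed simp_all
  show ?thesis
  proof (rule that[OF g])
    fix k assume "k \<in> {1..p}" "k < j"
    then show "(c j)\<^sup>2 + g \<le> (c k)\<^sup>2"
      using le[of k] sq[of k j] j by simp
  next
    fix k assume "k \<in> {1..p}" "j < k"
    then show "(c k)\<^sup>2 + g \<le> (c j)\<^sup>2"
      using le[of k] sq[of j k] j by simp
  qed
qed

lemma graph_chart_center:
  assumes "graph_chart M Mc 0 \<delta> A" "0 < \<delta>" "Mc 0 = M" "subspace M" "x \<in> M"
  shows "A 0 x = 0"
proof -
  have chart: "A 0 ` M \<subseteq> orthogonal_comp M" "M = {u + A 0 u | u. u \<in> M}"
    using assms(1-3) unfolding graph_chart_def by auto
  then have "x + A 0 x \<in> M"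
    using assms(5) by blast
  then have "(x + A 0 x) - x \<in> M"
    using subspace_diff[OF assms(4) _ assms(5)] by blast
  then have "A 0 x \<in> M"
    by simp
  moreover have "A 0 x \<in> orthogonal_comp M"
    using chart(1) assms(5) by blast
  ultimately have "A 0 x \<bullet> A 0 x = 0"
    unfolding orthogonal_comp_def orthogonal_def by blast
  then show ?thesis
    by simp
qed

lemma jordan_angle_in_open_interval:
  fixes L K :: "'a::euclidean_space set"
  assumes L: "subspace L" "dim L = p" and K: "subspace K" "dim K = p"
    and first: "jordan_angle L K 1 \<noteq> 0" and last: "jordan_angle L K p \<noteq> pi / 2"
    and k: "k \<in> {1..p}"
  shows "0 < jordan_angle L K k \<and> jordan_angle L K k < pi / 2"
proof -
  have "jordan_angle L K 1 \<le> jordan_angle L K k" "jordan_angle L K k \<le> jordan_angle L K p"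
    using k by (auto intro: jordan_angle_mono[OF L K])
  moreover have "0 \<le> jordan_angle L K 1" "jordan_angle L K p \<le> pi / 2"
    using jordan_angle_range[OF L K] k by auto
  ultimately show ?thesis
    using first last by linarith
qed

lemma cos_jordan_angle_strict_antimono:
  fixes L K :: "'a::euclidean_space set"
  assumes L: "subspace L" "dim L = p" and K: "subspace K" "dim K = p"
    and first: "jordan_angle L K 1 \<noteq> 0" and last: "jordan_angle L K p \<noteq> pi / 2"
    and distinct: "\<forall>j. 1 \<le> j \<and> j < p \<longrightarrow> jordan_angle L K (j + 1) \<noteq> jordan_angle L K j"
    and ab: "a \<in> {1..p}" "b \<in> {1..p}" "a < b"
  shows "cos (jordan_angle L K b) < cos (jordan_angle L K a)"
  using jordan_angle_strict_mono[OF L K distinct, of a b] ab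
    jordan_angle_in_open_interval[OF L K first last ab(1)] jordan_angle_in_open_interval[OF L K first last ab(2)]
  by (simp add: cos_mono_less_eq)

lemma eventually_sum_norm_le_linear:
  fixes \<phi> :: "nat \<Rightarrow> real \<Rightarrow> 'a::real_normed_vector"
  assumes "\<And>k. k \<in> S \<Longrightarrow> (\<phi> k has_vector_derivative v k) (at 0)" "\<And>k. k \<in> S \<Longrightarrow> \<phi> k 0 = 0"
    and "finite S"
  shows "\<forall>\<^sub>F \<epsilon> in nhds 0. (\<Sum>k\<in>S. norm (\<phi> k \<epsilon>)) \<le> (\<Sum>k\<in>S. norm (v k) + 1) * \<bar>\<epsilon>\<bar>"
proof -
  have "\<forall>\<^sub>F \<epsilon> in nhds 0. \<forall>k\<in>S. norm (\<phi> k \<epsilon>) \<le> (norm (v k) + 1) * \<bar>\<epsilon>\<bar>"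
    using assms by (intro eventually_ball_finite ballI eventually_norm_le_linear) auto
  then show ?thesis
    unfolding sum_distrib_right by (rule eventually_mono) (rule sum_mono, blast)
qed

lemma has_real_derivative_inner_left:
  "(\<phi> has_vector_derivative v) (at x) \<Longrightarrow> ((\<lambda>\<epsilon>. a \<bullet> \<phi> \<epsilon>) has_real_derivative a \<bullet> v) (at x)"
  unfolding has_real_derivative_iff_has_vector_derivative
  by (rule bounded_linear.has_vector_derivative[OF bounded_linear_inner_right])

lemma sq_cos_jordan_angle_graph_estimate:
  fixes L M K :: "'a::euclidean_space set"
  assumes L: "subspace L" "dim L = p" and M: "subspace M"
    and e: "orthonormal_basis p e L" and f: "orthonormal_basis p f M"
    and diag: "\<And>i k. i \<in> {1..p} \<Longrightarrow> k \<in> {1..p} \<Longrightarrow> e i \<bullet> f k = (if i = k then c k else 0)"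
    and A: "linear A" "\<forall>u\<in>M. A u \<in> orthogonal_comp M"
    and K: "K = {u + A u | u. u \<in> M}" "subspace K" "dim K = p"
    and j: "j \<in> {1..p}" and g: "g > 0"
    and gap_above: "\<And>k. k \<in> {1..p} \<Longrightarrow> k < j \<Longrightarrow> (c j)\<^sup>2 + g \<le> (c k)\<^sup>2"
    and gap_below: "\<And>k. k \<in> {1..p} \<Longrightarrow> j < k \<Longrightarrow> (c k)\<^sup>2 + g \<le> (c j)\<^sup>2"
    and small: "8 * (\<Sum>k=1..p. norm (A (f k))) \<le> g"
  shows "\<bar>(cos (jordan_angle L K j))\<^sup>2 - ((c j)\<^sup>2 + 2 * graph_variation p f A (e j) (e j))\<bar>
     \<le> (\<Sum>k=1..p. norm (A (f k)))\<^sup>2 + 8 * (\<Sum>k=1..p. norm (A (f k)))\<^sup>2 / g"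
proof -
  obtain e' g' where e': "orthonormal_basis p e' L" and g': "orthonormal_basis p g' K"
    and sv: "is_singular_values p (\<lambda>i k. e' i \<bullet> g' k) (\<lambda>j. cos (jordan_angle L K j))"
    using jordan_angles_cos_singular_values[OF L K(2,3)] by blast
  show ?thesis
    using singular_value_sq_expansion[OF e f diag L M A K e' g' sv j g gap_above gap_below small] by simp
qed

lemma sq_cos_jordan_angle_expansion:
  fixes L M :: "'a::euclidean_space set" and Mc :: "real \<Rightarrow> 'a set"
  assumes L: "subspace L" "dim L = p" and M: "subspace M"
    and e: "orthonormal_basis p e L" and f: "orthonormal_basis p f M"
    and diag: "\<And>i k. i \<in> {1..p} \<Longrightarrow> k \<in> {1..p} \<Longrightarrow> e i \<bullet> f k = (if i = k then c k else 0)"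
    and c_pos: "\<And>k. k \<in> {1..p} \<Longrightarrow> 0 < c k"
    and c_strict: "\<And>a b. a \<in> {1..p} \<Longrightarrow> b \<in> {1..p} \<Longrightarrow> a < b \<Longrightarrow> c b < c a"
    and j: "j \<in> {1..p}" and ej: "e j = c j *\<^sub>R f j - s *\<^sub>R r"
    and I: "open I" "0 \<in> I" "\<And>\<epsilon>. \<epsilon> \<in> I \<Longrightarrow> subspace (Mc \<epsilon>) \<and> dim (Mc \<epsilon>) = p"
    and chart: "graph_chart M Mc 0 \<delta> A" "0 < \<delta>" "Mc 0 = M"
    and tangent: "\<And>x. x \<in> M \<Longrightarrow> ((\<lambda>\<epsilon>. A \<epsilon> x) has_vector_derivative H x) (at 0)"
  obtains C where "\<forall>\<^sub>F \<epsilon> in nhds 0. 0 \<le> jordan_angle L (Mc \<epsilon>) j \<and> jordan_angle L (Mc \<epsilon>) j \<le> pi / 2"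
    "\<forall>\<^sub>F \<epsilon> in nhds 0. \<bar>(cos (jordan_angle L (Mc \<epsilon>) j))\<^sup>2
      - ((c j)\<^sup>2 - 2 * c j * s * (r \<bullet> A \<epsilon> (f j)))\<bar> \<le> C * \<epsilon>\<^sup>2"
proof -
  obtain g where g: "0 < g"
    and gap_above: "\<And>k. k \<in> {1..p} \<Longrightarrow> k < j \<Longrightarrow> (c j)\<^sup>2 + g \<le> (c k)\<^sup>2"
    and gap_below: "\<And>k. k \<in> {1..p} \<Longrightarrow> j < k \<Longrightarrow> (c k)\<^sup>2 + g \<le> (c j)\<^sup>2"
    using squares_gap_exists[where c=c and p=p, OF c_pos c_strict j] by blast
  define \<beta> where "\<beta> \<epsilon> = (\<Sum>k=1..p. norm (A \<epsilon> (f k)))" for \<epsilon>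
  define C where "C = (\<Sum>k=1..p. norm (H (f k)) + 1)"
  have \<beta>_le: "\<forall>\<^sub>F \<epsilon> in nhds 0. \<beta> \<epsilon> \<le> C * \<bar>\<epsilon>\<bar>"
    unfolding \<beta>_def C_def using orthonormal_basis_mem[OF f] graph_chart_center[OF chart M]
    by (intro eventually_sum_norm_le_linear tangent) auto
  have "((\<lambda>\<epsilon>. 8 * (C * \<bar>\<epsilon>\<bar>)) \<longlongrightarrow> 8 * (C * \<bar>0\<bar>)) (nhds 0)"
    by (intro tendsto_intros filterlim_ident)
  then have small: "\<forall>\<^sub>F \<epsilon> in nhds 0. 8 * (C * \<bar>\<epsilon>\<bar>) < g"
    using g by (auto dest: order_tendstoD)
  have "\<forall>\<^sub>F \<epsilon> in nhds 0. \<bar>\<epsilon>\<bar> < \<delta>"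
    unfolding eventually_nhds_metric using chart(2) by (intro exI[of _ \<delta>]) (auto simp: dist_norm)
  moreover have "\<forall>\<^sub>F \<epsilon> in nhds 0. \<epsilon> \<in> I"
    using I(1,2) by (rule eventually_nhds_in_open)
  ultimately have "\<forall>\<^sub>F \<epsilon> in nhds 0. (0 \<le> jordan_angle L (Mc \<epsilon>) j \<and> jordan_angle L (Mc \<epsilon>) j \<le> pi / 2) \<and>
      \<bar>(cos (jordan_angle L (Mc \<epsilon>) j))\<^sup>2 - ((c j)\<^sup>2 - 2 * c j * s * (r \<bullet> A \<epsilon> (f j)))\<bar>
        \<le> (C\<^sup>2 + 8 * C\<^sup>2 / g) * \<epsilon>\<^sup>2"
    using \<beta>_le small
  proof eventually_elim
    case (elim \<epsilon>)
    have A: "linear (A \<epsilon>)" "\<forall>u\<in>M. A \<epsilon> u \<in> orthogonal_comp M" "Mc \<epsilon> = {u + A \<epsilon> u | u. u \<in> M}"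
      using chart(1) elim(1) unfolding graph_chart_def by auto
    have K: "subspace (Mc \<epsilon>)" "dim (Mc \<epsilon>) = p"
      using I(3)[OF elim(2)] by auto
    have "8 * \<beta> \<epsilon> \<le> g"
      using elim(3,4) by linarith
    then have "\<bar>(cos (jordan_angle L (Mc \<epsilon>) j))\<^sup>2 - ((c j)\<^sup>2 + 2 * graph_variation p f (A \<epsilon>) (e j) (e j))\<bar>
        \<le> (\<beta> \<epsilon>)\<^sup>2 + 8 * (\<beta> \<epsilon>)\<^sup>2 / g"
      using sq_cos_jordan_angle_graph_estimate[OF L M e f diag A K j g gap_above gap_below]
      unfolding \<beta>_def by simp
    moreover have "graph_variation p f (A \<epsilon>) (e j) (e j) = - c j * s * (r \<bullet> A \<epsilon> (f j))"
      using onb_proj_diagonal[OF e f diag j] ej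
      by (simp add: graph_variation_def linear_scale[OF A(1)])
    moreover have "(\<beta> \<epsilon>)\<^sup>2 \<le> C\<^sup>2 * \<epsilon>\<^sup>2"
      using power_mono[OF elim(3), of 2] by (simp add: \<beta>_def sum_nonneg power_mult_distrib)
    moreover have "8 * (\<beta> \<epsilon>)\<^sup>2 / g \<le> 8 * (C\<^sup>2 * \<epsilon>\<^sup>2) / g"
      using calculation(3) g by (simp add: divide_right_mono)
    ultimately show ?case
      using jordan_angle_range[OF L K j] by (simp add: algebra_simps)
  qed
  then show ?thesis
    using that unfolding eventually_conj_iff by blast
qed

theorem proposition8:
  fixes p q :: nat and L M :: "(real^'n) set" and I :: "real set"
    and Mc :: "real \<Rightarrow> (real^'n) set"
    and e f :: "nat \<Rightarrow> real^'n" and r :: "nat \<Rightarrow> real^'n"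
    and H :: "real^'n \<Rightarrow> real^'n" and h :: "nat \<Rightarrow> nat \<Rightarrow> real"
  assumes dim: "CARD('n) = p + q" and pq: "p \<le> q"
    and L: "L \<in> Gr p TYPE('n)" and M: "M \<in> Gr p TYPE('n)"
    and psi1: "jordan_angle L M 1 \<noteq> 0"
    and psip: "jordan_angle L M p \<noteq> pi / 2"
    and distinct: "\<forall>j. 1 \<le> j \<and> j < p \<longrightarrow> jordan_angle L M (j + 1) \<noteq> jordan_angle L M j"
    and e: "orthonormal_basis p e L" and f: "orthonormal_basis p f M"
    and ef: "\<forall>i\<in>{1..p}. \<forall>j\<in>{1..p}. i \<noteq> j \<longrightarrow> e i \<bullet> f j = 0"
    and efj: "\<forall>j\<in>{1..p}. e j \<bullet> f j = cos (jordan_angle L M j)"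
    and r: "orthonormal_basis q r (orthogonal_comp M)"
    and er: "\<forall>j\<in>{1..p}. e j = cos (jordan_angle L M j) *\<^sub>R f j - sin (jordan_angle L M j) *\<^sub>R r j"
    and H_lin: "linear H" and H_range: "H ` M \<subseteq> orthogonal_comp M"
    and h: "\<forall>j\<in>{1..p}. H (f j) = (\<Sum>k=1..q. h j k *\<^sub>R r k)"
    and curve: "smooth_Gr_curve p q I Mc" and I0: "0 \<in> I" and M0: "Mc 0 = M"
    and tangent: "curve_derivative_at0 Mc H"
  shows "\<forall>j\<in>{1..p}. ((\<lambda>\<epsilon>. jordan_angle L (Mc \<epsilon>) j) has_real_derivative h j j) (at 0)"
proof (intro ballI)
  fix j assume j: "j \<in> {1..p}"
  have L': "subspace L" "dim L = p" and M': "subspace M" "dim M = p"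
    using L M unfolding Gr_def by auto
  have angle: "0 < jordan_angle L M k \<and> jordan_angle L M k < pi / 2" if "k \<in> {1..p}" for k
    by (rule jordan_angle_in_open_interval[OF L' M' psi1 psip that])
  have diag: "e i \<bullet> f k = (if i = k then cos (jordan_angle L M k) else 0)" if "i \<in> {1..p}" "k \<in> {1..p}" for i k
    using ef efj that by auto
  have cos_pos: "0 < cos (jordan_angle L M k)" if "k \<in> {1..p}" for k
    using angle[OF that] by (intro cos_gt_zero_pi) auto
  obtain \<delta> A where chart: "graph_chart M Mc 0 \<delta> A" "0 < \<delta>"
    and dA: "\<And>x. x \<in> M \<Longrightarrow> ((\<lambda>\<epsilon>. A \<epsilon> x) has_vector_derivative H x) (at 0)"
    using tangent M0 unfolding curve_derivative_at0_def by blast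
  have I: "open I" "\<And>\<epsilon>. \<epsilon> \<in> I \<Longrightarrow> subspace (Mc \<epsilon>) \<and> dim (Mc \<epsilon>) = p"
    using curve unfolding smooth_Gr_curve_def Gr_def by auto
  obtain C where range: "\<forall>\<^sub>F \<epsilon> in nhds 0. 0 \<le> jordan_angle L (Mc \<epsilon>) j \<and> jordan_angle L (Mc \<epsilon>) j \<le> pi / 2"
    and expansion: "\<forall>\<^sub>F \<epsilon> in nhds 0. \<bar>(cos (jordan_angle L (Mc \<epsilon>) j))\<^sup>2 - ((cos (jordan_angle L M j))\<^sup>2
      - 2 * cos (jordan_angle L M j) * sin (jordan_angle L M j) * (r j \<bullet> A \<epsilon> (f j)))\<bar> \<le> C * \<epsilon>\<^sup>2"
    by (rule sq_cos_jordan_angle_expansion[OF L' M'(1) e f diag cos_pos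
          cos_jordan_angle_strict_antimono[OF L' M' psi1 psip distinct] j er[rule_format, OF j]
          I(1) I0 I(2) chart M0 dA])
  have "r j \<bullet> H (f j) = h j j"
    using h j pq orthonormal_family_inner_sum[OF orthonormal_basis_family[OF r], of j "h j"]
    by (simp add: inner_commute)
  then have "((\<lambda>\<epsilon>. r j \<bullet> A \<epsilon> (f j)) has_real_derivative h j j) (at 0)"
    using has_real_derivative_inner_left[OF dA[OF orthonormal_basis_mem[OF f j]], of "r j"] by simp
  moreover have "r j \<bullet> A 0 (f j) = 0"
    using graph_chart_center[OF chart M0 M'(1) orthonormal_basis_mem[OF f j]] by simp
  ultimately show "((\<lambda>\<epsilon>. jordan_angle L (Mc \<epsilon>) j) has_real_derivative h j j) (at 0)"
    using angle[OF j] by (intro has_real_derivative_angle_of_cos_sq_expansion[OF range expansion]) auto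
qed

end
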